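(* Fix $\gamma\in[0,1)$, $R_{\max}>0$ and $K\ge2$, and let $z_1<\dots<z_K$ be evenly spaced with $z_1=-R_{\max}/(1-\gamma)$ and $z_K=R_{\max}/(1-\gamma)$. Let $s_k(\mu)=\mathbb{E}_{Z\sim\mu}[h_{z_k,z_{k+1}}(Z)]$ for $k=1,\dots,K-1$. Then for every MDP with discount factor $\gamma$ whose reward distributions are all supported on $[-R_{\max},R_{\max}]$, and every policy $\pi$, the CDRL fixed point $\eta$ (the unique collection of distributions supported on $\{z_1,\dots,z_K\}$ with $\eta=\Pi_{\mathcal C}\mathcal T^\pi\eta$) satisfies $$\sup_{(x,a)\in\mathcal X\times\mathcal A}\frac{1}{K-1}\sum_{k=1}^{K-1}\big|s_k(\eta^\pi(x,a))-s_k(\eta(x,a))\big|\le\frac{\gamma}{2(1-\gamma)(K-1)}.$$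
   Context: MDP setting: finite state space $\mathcal X$, finite action space $\mathcal A$, transition kernel $p$, discount $\gamma$, reward distributions $\mathcal R(\cdot\mid x,a)$; policy $\pi:\mathcal X\to\mathscr P(\mathcal A)$; $\eta^\pi(x,a)$ is the law of the return $\sum_t\gamma^tR_t$ started from $X_0=x,A_0=a$ with $R_t\sim\mathcal R(\cdot\mid X_t,A_t)$, $X_{t+1}\sim p(\cdot\mid X_t,A_t)$, $A_{t+1}\sim\pi(\cdot\mid X_{t+1})$. Distributional Bellman operator: for a collection $\eta=(\eta(x,a))$ of distributions, $(\mathcal T^\pi\eta)(x,a)=\sum_{x',a'}p(x'\mid x,a)\pi(a'\mid x')\int\mathcal R(\mathrm dr\mid x,a)\,(f_{r,\gamma})_\#\eta(x',a')$, where $f_{r,\gamma}(z)=r+\gamma z$ and $g_\#\mu$ is the pushforward; $\eta^\pi=\mathcal T^\pi\eta^\pi$. For $a<b$, $h_{a,b}(x)=1$ for $x\le a$, $0$ for $x\ge b$, $(b-x)/(b-a)$ on $[a,b]$. The Cramér projection $\Pi_{\mathcal C}$: $\Pi_{\mathcal C}(\delta_w)=\delta_{z_1}$ if $w\le z_1$, $\delta_{z_K}$ if $w\ge z_K$, and $\frac{z_{k+1}-w}{z_{k+1}-z_k}\delta_{z_k}+\frac{w-z_k}{z_{k+1}-z_k}\delta_{z_{k+1}}$ for $z_k\le w\le z_{k+1}$, extended affinely to all distributions, and applied statewise to collections. *)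

theory Defs
  imports "HOL-Probability.Probability"
begin

definition hfun :: "real \<Rightarrow> real \<Rightarrow> real \<Rightarrow> real" where
  "hfun a b w = (if w \<le> a then 1 else if b \<le> w then 0 else (b - w) / (b - a))"

text \<open>Evenly spaced support z_1 < ... < z_K with z_1 = -Rmax/(1-gamma), z_K = Rmax/(1-gamma);
  indices k = 1..K.\<close>
definition zgrid :: "real \<Rightarrow> real \<Rightarrow> nat \<Rightarrow> nat \<Rightarrow> real" where
  "zgrid \<gamma> Rmax K k =
     - Rmax / (1 - \<gamma>) + (real k - 1) * (2 * Rmax / (1 - \<gamma>)) / (real K - 1)"

definition cramer_dirac_pmf :: "(nat \<Rightarrow> real) \<Rightarrow> nat \<Rightarrow> real \<Rightarrow> real pmf" where
  "cramer_dirac_pmf z K w =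
     (if w \<le> z 1 then return_pmf (z 1)
      else if z K \<le> w then return_pmf (z K)
      else (let k = (GREATEST k. k < K \<and> z k \<le> w) in
            map_pmf (\<lambda>b. if b then z (Suc k) else z k)
              (bernoulli_pmf ((w - z k) / (z (Suc k) - z k)))))"

text \<open>Cramer projection of a general (Borel) distribution: the affine (mixture) extension.\<close>
definition cramer_proj :: "(nat \<Rightarrow> real) \<Rightarrow> nat \<Rightarrow> real measure \<Rightarrow> real measure" where
  "cramer_proj z K \<mu> = \<mu> \<bind> (\<lambda>w. distr (measure_pmf (cramer_dirac_pmf z K w)) borel id)"

definition bellman_op ::
  "('x \<Rightarrow> 'a \<Rightarrow> 'x pmf) \<Rightarrow> ('x \<Rightarrow> 'a pmf) \<Rightarrow> ('x \<Rightarrow> 'a \<Rightarrow> real measure) \<Rightarrow> real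
   \<Rightarrow> ('x \<Rightarrow> 'a \<Rightarrow> real measure) \<Rightarrow> 'x \<Rightarrow> 'a \<Rightarrow> real measure" where
  "bellman_op p \<pi> R \<gamma> \<eta> x a =
     measure_pmf (bind_pmf (p x a) (\<lambda>x'. map_pmf (\<lambda>a'. (x', a')) (\<pi> x')))
     \<bind> (\<lambda>(x', a'). R x a \<bind> (\<lambda>r. distr (\<eta> x' a') borel (\<lambda>z. r + \<gamma> * z)))"

text \<open>At each time step t an independent sample
  (nx, act, rew) is drawn, where independently for every (x,a): nx(x,a) ~ p(.|x,a),
  rew(x,a) ~ R(.|x,a), and for every x: act(x) ~ pi(.|x).  Then
  X_{t+1} = nx_t(X_t,A_t), A_{t+1} = act_t(X_{t+1}), R_t = rew_t(X_t,A_t).\<close>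
type_synonym ('x, 'a) step = "('x \<times> 'a \<Rightarrow> 'x) \<times> ('x \<Rightarrow> 'a) \<times> ('x \<times> 'a \<Rightarrow> real)"

definition step_measure ::
  "('x \<Rightarrow> 'a \<Rightarrow> 'x pmf) \<Rightarrow> ('x \<Rightarrow> 'a pmf) \<Rightarrow> ('x \<Rightarrow> 'a \<Rightarrow> real measure) \<Rightarrow> ('x, 'a) step measure" where
  "step_measure p \<pi> R =
     (PiM UNIV (\<lambda>xa. measure_pmf (p (fst xa) (snd xa))))
     \<Otimes>\<^sub>M (PiM UNIV (\<lambda>x. measure_pmf (\<pi> x)))
     \<Otimes>\<^sub>M (PiM UNIV (\<lambda>xa. R (fst xa) (snd xa)))"

primrec traj :: "'x \<times> 'a \<Rightarrow> ('x, 'a) step stream \<Rightarrow> nat \<Rightarrow> 'x \<times> 'a" where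
  "traj s \<omega> 0 = s"
| "traj s \<omega> (Suc t) =
     (let x' = fst (\<omega> !! t) (traj s \<omega> t) in (x', fst (snd (\<omega> !! t)) x'))"

definition reward_at :: "'x \<times> 'a \<Rightarrow> ('x, 'a) step stream \<Rightarrow> nat \<Rightarrow> real" where
  "reward_at s \<omega> t = snd (snd (\<omega> !! t)) (traj s \<omega> t)"

definition disc_return :: "real \<Rightarrow> 'x \<times> 'a \<Rightarrow> ('x, 'a) step stream \<Rightarrow> real" where
  "disc_return \<gamma> s \<omega> = (\<Sum>t. \<gamma> ^ t * reward_at s \<omega> t)"

definition eta_pi ::
  "('x \<Rightarrow> 'a \<Rightarrow> 'x pmf) \<Rightarrow> ('x \<Rightarrow> 'a pmf) \<Rightarrow> ('x \<Rightarrow> 'a \<Rightarrow> real measure) \<Rightarrow> real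
   \<Rightarrow> 'x \<Rightarrow> 'a \<Rightarrow> real measure" where
  "eta_pi p \<pi> R \<gamma> x a =
     distr (stream_space (step_measure p \<pi> R)) borel (disc_return \<gamma> (x, a))"

definition s_stat :: "(nat \<Rightarrow> real) \<Rightarrow> nat \<Rightarrow> real measure \<Rightarrow> real" where
  "s_stat z k \<mu> = (\<integral>w. hfun (z k) (z (Suc k)) w \<partial>\<mu>)"

end

theory Submission
  imports Defs
begin

text \<open>
  In the affine coordinate in which the grid is 0, ..., K - 1, the statistic s_k is the expectation
  of the ramp clip (k - y), so the sign-weighted sum of the K - 1 statistic gaps at (x, a) is the gap
  between the integrals of a single combination phi of ramps with weights of modulus at most 1.
  Both eta^pi and the CDRL fixed point eta satisfy a Bellman equation for such integrals: eta^pi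
  exactly, and eta because the Cramer projection preserves integrals of functions that are affine
  between consecutive grid points, as long as the projected measure lives in [z_1, z_K].
  After one Bellman step phi becomes the gamma-Lipschitz function w \<mapsto> phi (r + gamma w).
  Replacing it by its piecewise linear interpolant on the grid costs at most gamma/2 against eta^pi,
  which lives in [z_1, z_K], and nothing against eta, which lives on the grid; the interpolant is
  again a combination of ramps, now with weights bounded by gamma. Hence the largest gap G satisfies
  G \<le> gamma/2 + gamma G.
\<close>

section \<open>Ramps and piecewise linear interpolation\<close>

definition clip :: "real \<Rightarrow> real" where
  "clip t = max 0 (min 1 t)"

lemma clip_measurable [measurable]: "clip \<in> borel_measurable borel"
  unfolding clip_def by measurable

lemma clip_mono: "s \<le> t \<Longrightarrow> clip s \<le> clip t"
  by (auto simp: clip_def)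

lemma clip_affine_on_unit_interval:
  assumes "m \<in> \<int>" "m \<le> t" "t \<le> m + 1"
  shows "clip t = (m + 1 - t) * clip m + (t - m) * clip (m + 1)"
proof -
  from assms(1) obtain i where i: "m = of_int i" by (auto elim: Ints_cases)
  consider "i \<ge> 1" | "i = 0" | "i \<le> -1" by linarith
  then show ?thesis
  proof cases
    case 1
    then have "m \<ge> 1" using i by simp
    then show ?thesis using assms by (simp add: clip_def algebra_simps)
  next
    case 2
    then show ?thesis using assms i by (simp add: clip_def)
  next
    case 3
    then have "m \<le> -1" using i by simp
    then show ?thesis using assms by (simp add: clip_def)
  qed
qed

lemma sum_clip: "(\<Sum>k=1..n. clip (real k - y)) = max 0 (min (real n) (real n - y))"
proof (induction n)
  case (Suc n)
  then show ?case by (simp add: clip_def)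
qed simp

lemma sum_abs_clip_diff_le: "(\<Sum>k=1..n. \<bar>clip (real k - u) - clip (real k - v)\<bar>) \<le> \<bar>u - v\<bar>"
proof -
  have *: "(\<Sum>k=1..n. \<bar>clip (real k - a) - clip (real k - b)\<bar>) \<le> b - a" if "a \<le> b" for a b
  proof -
    have "(\<Sum>k=1..n. \<bar>clip (real k - a) - clip (real k - b)\<bar>)
        = (\<Sum>k=1..n. clip (real k - a)) - (\<Sum>k=1..n. clip (real k - b))"
      using that clip_mono[of "real _ - b" "real _ - a"] by (simp add: sum_subtractf[symmetric])
    also have "\<dots> \<le> b - a"
      unfolding sum_clip using that by simp
    finally show ?thesis .
  qed
  show ?thesis
    using *[of u v] *[of v u] by (cases "u \<le> v") (auto simp: abs_minus_commute)
qed

definition clip_comb :: "(nat \<Rightarrow> real) \<Rightarrow> nat \<Rightarrow> real \<Rightarrow> real" where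
  "clip_comb e n y = (\<Sum>k=1..n. e k * clip (real k - y))"

lemma clip_comb_measurable [measurable]: "clip_comb e n \<in> borel_measurable borel"
  unfolding clip_comb_def by measurable

lemma abs_clip_comb_le:
  assumes "\<And>k. \<bar>e k\<bar> \<le> c"
  shows "\<bar>clip_comb e n y\<bar> \<le> c * real n"
proof -
  have "\<bar>clip_comb e n y\<bar> \<le> (\<Sum>k=1..n. \<bar>e k\<bar> * \<bar>clip (real k - y)\<bar>)"
    unfolding clip_comb_def abs_mult[symmetric] by (rule sum_abs)
  also have "\<dots> \<le> (\<Sum>k=1..n. c)"
    using assms by (intro sum_mono order.trans[OF mult_right_le_one_le assms]) (auto simp: clip_def)
  finally show ?thesis by (simp add: mult.commute)
qed

lemma clip_comb_lipschitz:
  assumes "\<And>k. \<bar>e k\<bar> \<le> 1"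
  shows "\<bar>clip_comb e n u - clip_comb e n v\<bar> \<le> \<bar>u - v\<bar>"
proof -
  have "\<bar>clip_comb e n u - clip_comb e n v\<bar>
      \<le> (\<Sum>k=1..n. \<bar>e k\<bar> * \<bar>clip (real k - u) - clip (real k - v)\<bar>)"
    unfolding clip_comb_def sum_subtractf[symmetric] right_diff_distrib[symmetric] abs_mult[symmetric]
    by (rule sum_abs)
  also have "\<dots> \<le> (\<Sum>k=1..n. \<bar>clip (real k - u) - clip (real k - v)\<bar>)"
    using assms by (intro sum_mono mult_left_le_one_le) auto
  also have "\<dots> \<le> \<bar>u - v\<bar>"
    by (rule sum_abs_clip_diff_le)
  finally show ?thesis .
qed

lemma clip_comb_telescope:
  fixes g :: "nat \<Rightarrow> real"
  assumes "j < n" "real j \<le> y" "y \<le> real j + 1"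
  shows "clip_comb (\<lambda>k. g (k - 1) - g k) n y = (real j + 1 - y) * (g j - g (Suc j)) + g (Suc j) - g n"
  using assms(1)
proof (induction n)
  case 0
  then show ?case by simp
next
  case (Suc n)
  have split: "clip_comb (\<lambda>k. g (k - 1) - g k) (Suc n) y
      = clip_comb (\<lambda>k. g (k - 1) - g k) n y + (g n - g (Suc n)) * clip (real n + 1 - y)"
    by (simp add: clip_comb_def add.commute)
  show ?case
  proof (cases "j = n")
    case True
    have "clip_comb (\<lambda>k. g (k - 1) - g k) n y = 0"
      unfolding clip_comb_def using True assms(2) by (intro sum.neutral) (auto simp: clip_def)
    then show ?thesis
      unfolding split using True assms(2,3) by (simp add: clip_def algebra_simps)
  next
    case False
    with Suc.prems have "j < n" by simp
    moreover have "clip (real n + 1 - y) = 1"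
      using \<open>j < n\<close> assms(3) by (simp add: clip_def)
    ultimately show ?thesis
      unfolding split using Suc.IH by (simp add: algebra_simps)
  qed
qed

definition pl_interp :: "nat \<Rightarrow> (real \<Rightarrow> real) \<Rightarrow> real \<Rightarrow> real" where
  "pl_interp n f y = f (real n) + clip_comb (\<lambda>k. f (real (k - 1)) - f (real k)) n y"

lemma pl_interp_measurable [measurable]: "pl_interp n f \<in> borel_measurable borel"
  unfolding pl_interp_def by measurable

lemma pl_interp_on_cell:
  assumes "j < n" "real j \<le> y" "y \<le> real j + 1"
  shows "pl_interp n f y = (real j + 1 - y) * f (real j) + (y - real j) * f (real j + 1)"
  unfolding pl_interp_def
  using clip_comb_telescope[OF assms, of "\<lambda>k. f (real k)"] by (simp add: algebra_simps)

lemma pl_interp_at_node: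
  assumes "m \<le> n" "1 \<le> n"
  shows "pl_interp n f (real m) = f (real m)"
proof (cases "m < n")
  case True
  then show ?thesis using pl_interp_on_cell[of m n "real m"] by simp
next
  case False
  then show ?thesis using pl_interp_on_cell[of "n - 1" n "real m"] assms by (simp add: of_nat_diff)
qed

lemma obtain_unit_cell:
  assumes "1 \<le> n" "0 \<le> y" "y \<le> real n"
  obtains j where "j < n" "real j \<le> y" "y \<le> real j + 1"
proof (cases "real (n - 1) \<le> y")
  case True
  then show ?thesis using assms by (intro that[of "n - 1"]) auto
next
  case False
  then show ?thesis using assms by (intro that[of "nat \<lfloor>y\<rfloor>"]) linarith+
qed

lemma sub_pl_interp_le:
  assumes lip: "\<And>u v. \<bar>f u - f v\<bar> \<le> L * \<bar>u - v\<bar>"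
    and "1 \<le> n" "0 \<le> y" "y \<le> real n"
  shows "f y - pl_interp n f y \<le> L / 2"
proof -
  obtain j where j: "j < n" "real j \<le> y" "y \<le> real j + 1"
    using obtain_unit_cell assms(2-4) by blast
  define t where "t = y - real j"
  have t: "0 \<le> t" "t \<le> 1" using j by (auto simp: t_def)
  have "f y - pl_interp n f y = (1 - t) * (f y - f (real j)) + t * (f y - f (real j + 1))"
    using pl_interp_on_cell[OF j] by (simp add: t_def algebra_simps)
  also have "\<dots> \<le> (1 - t) * (L * t) + t * (L * (1 - t))"
  proof (intro add_mono mult_left_mono)
    show "f y - f (real j) \<le> L * t"
      using lip[of y "real j"] j by (simp add: t_def abs_le_iff)
    show "f y - f (real j + 1) \<le> L * (1 - t)"
      using lip[of y "real j + 1"] j by (simp add: t_def abs_le_iff algebra_simps)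
  qed (use t in auto)
  also have "\<dots> = L * (1 / 2 - (2 * t - 1)\<^sup>2 / 2)"
    by (simp add: power2_eq_square field_simps)
  also have "\<dots> \<le> L * (1 / 2)"
    using lip[of 1 0] by (intro mult_left_mono) auto
  finally show ?thesis by simp
qed

lemma (in prob_space) abs_integral_le_const:
  fixes f :: "'a \<Rightarrow> real"
  assumes "f \<in> borel_measurable M" "\<And>x. \<bar>f x\<bar> \<le> B"
  shows "\<bar>\<integral>x. f x \<partial>M\<bar> \<le> B"
proof -
  have "integrable M f"
    using assms by (intro integrable_const_bound[where B=B]) auto
  moreover have "- B \<le> f x" "f x \<le> B" for x
    using assms(2)[of x] by auto
  ultimately have "(\<integral>x. f x \<partial>M) \<le> B" "- B \<le> (\<integral>x. f x \<partial>M)"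
    by (auto intro!: integral_le_const integral_ge_const)
  then show ?thesis by simp
qed

lemma (in prob_space) AE_in_set_of_emeasure_eq_1:
  assumes "A \<in> sets M" "emeasure M A = 1"
  shows "AE x in M. x \<in> A"
  using assms by (intro AE_prob_1) (simp add: emeasure_eq_measure)

lemma (in prob_space) integrable_clip:
  "Y \<in> borel_measurable M \<Longrightarrow> integrable M (\<lambda>w. clip (real k - Y w))"
  by (intro integrable_const_bound[where B=1]) (auto simp: clip_def)

lemma (in prob_space) integrable_clip_comb:
  "Y \<in> borel_measurable M \<Longrightarrow> integrable M (\<lambda>w. clip_comb e n (Y w))"
  unfolding clip_comb_def by (intro Bochner_Integration.integrable_sum integrable_mult_right integrable_clip)

lemma (in prob_space) integral_clip_comb:
  assumes "Y \<in> borel_measurable M"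
  shows "(\<integral>w. clip_comb e n (Y w) \<partial>M) = (\<Sum>k=1..n. e k * (\<integral>w. clip (real k - Y w) \<partial>M))"
  unfolding clip_comb_def using assms
  by (subst Bochner_Integration.integral_sum) (auto intro!: integrable_mult_right integrable_clip)

lemma (in prob_space) integrable_pl_interp:
  "Y \<in> borel_measurable M \<Longrightarrow> integrable M (\<lambda>w. pl_interp n f (Y w))"
  unfolding pl_interp_def by (intro Bochner_Integration.integrable_add integrable_const integrable_clip_comb)

lemma (in prob_space) integral_pl_interp:
  assumes "Y \<in> borel_measurable M"
  shows "(\<integral>w. pl_interp n f (Y w) \<partial>M)
    = f (real n) + (\<Sum>k=1..n. (f (real (k - 1)) - f (real k)) * (\<integral>w. clip (real k - Y w) \<partial>M))"
  unfolding pl_interp_def using assms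
  by (subst Bochner_Integration.integral_add) (auto simp: integrable_clip_comb integral_clip_comb prob_space)

(* The interpolation error of a Lipschitz f is at most L/2 on [0, n] and vanishes at the nodes,
   while the interpolant is a combination of ramps with coefficients bounded by L. *)
lemma integral_lipschitz_diff_le_ramp_stats:
  fixes \<mu> \<nu> :: "'a measure" and Y :: "'a \<Rightarrow> real" and f :: "real \<Rightarrow> real"
  assumes "prob_space \<mu>" "prob_space \<nu>"
    and Y[measurable]: "Y \<in> borel_measurable \<mu>" "Y \<in> borel_measurable \<nu>"
    and f[measurable]: "f \<in> borel_measurable borel"
    and bounded: "\<And>y. \<bar>f y\<bar> \<le> B"
    and lip: "\<And>u v. \<bar>f u - f v\<bar> \<le> L * \<bar>u - v\<bar>"
    and "1 \<le> n"
    and range_\<mu>: "AE w in \<mu>. 0 \<le> Y w \<and> Y w \<le> real n"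
    and range_\<nu>: "AE w in \<nu>. \<exists>m\<le>n. Y w = real m"
  shows "(\<integral>w. f (Y w) \<partial>\<mu>) - (\<integral>w. f (Y w) \<partial>\<nu>)
     \<le> L / 2 + L * (\<Sum>k=1..n. \<bar>(\<integral>w. clip (real k - Y w) \<partial>\<mu>) - (\<integral>w. clip (real k - Y w) \<partial>\<nu>)\<bar>)"
proof -
  interpret \<mu>: prob_space \<mu> by fact
  interpret \<nu>: prob_space \<nu> by fact
  define d where "d k = f (real (k - 1)) - f (real k)" for k
  define stat where "stat M k = (\<integral>w. clip (real k - Y w) \<partial>M)" for M k
  have "0 \<le> L"
    using lip[of 1 0] by simp
  have d_le: "\<bar>d k\<bar> \<le> L" for k
    using lip[of "real (k - 1)" "real k"] \<open>0 \<le> L\<close> by (cases k) (simp_all add: d_def)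
  have int_f: "integrable \<mu> (\<lambda>w. f (Y w))"
    using bounded by (intro \<mu>.integrable_const_bound[where B=B]) auto
  have "(\<integral>w. f (Y w) \<partial>\<mu>) - (\<integral>w. pl_interp n f (Y w) \<partial>\<mu>) = (\<integral>w. f (Y w) - pl_interp n f (Y w) \<partial>\<mu>)"
    using int_f \<mu>.integrable_pl_interp[OF Y(1)] by simp
  also have "\<dots> \<le> L / 2"
    using range_\<mu> sub_pl_interp_le[OF lip \<open>1 \<le> n\<close>] int_f \<mu>.integrable_pl_interp[OF Y(1)]
    by (intro \<mu>.integral_le_const) auto
  finally have approx: "(\<integral>w. f (Y w) \<partial>\<mu>) - (\<integral>w. pl_interp n f (Y w) \<partial>\<mu>) \<le> L / 2" .
  have exact: "(\<integral>w. f (Y w) \<partial>\<nu>) = (\<integral>w. pl_interp n f (Y w) \<partial>\<nu>)"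
    using range_\<nu> pl_interp_at_node[OF _ \<open>1 \<le> n\<close>] by (intro integral_cong_AE) auto
  have "(\<integral>w. f (Y w) \<partial>\<mu>) - (\<integral>w. f (Y w) \<partial>\<nu>)
      = ((\<integral>w. f (Y w) \<partial>\<mu>) - (\<integral>w. pl_interp n f (Y w) \<partial>\<mu>)) + (\<Sum>k=1..n. d k * (stat \<mu> k - stat \<nu> k))"
    unfolding exact \<mu>.integral_pl_interp[OF Y(1)] \<nu>.integral_pl_interp[OF Y(2)]
    by (simp add: d_def stat_def right_diff_distrib sum_subtractf)
  also have "\<dots> \<le> L / 2 + (\<Sum>k=1..n. L * \<bar>stat \<mu> k - stat \<nu> k\<bar>)"
  proof (intro add_mono sum_mono approx)
    fix k
    have "d k * (stat \<mu> k - stat \<nu> k) \<le> \<bar>d k\<bar> * \<bar>stat \<mu> k - stat \<nu> k\<bar>"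
      by (simp add: abs_mult[symmetric])
    also have "\<dots> \<le> L * \<bar>stat \<mu> k - stat \<nu> k\<bar>"
      by (intro mult_right_mono d_le) simp
    finally show "d k * (stat \<mu> k - stat \<nu> k) \<le> L * \<bar>stat \<mu> k - stat \<nu> k\<bar>" .
  qed
  finally show ?thesis
    by (simp add: stat_def sum_distrib_left)
qed

section \<open>The distributional Bellman operator\<close>

lemma shift_kernel_measurable:
  fixes E M :: "real measure"
  assumes "prob_space E" "sets E = sets borel" "sets M = sets borel"
  shows "(\<lambda>r. distr E borel (\<lambda>z. r + g * z)) \<in> M \<rightarrow>\<^sub>M subprob_algebra borel"
proof (rule measurable_distr2[where M=E])
  have "(\<lambda>(r, z). r + g * z) \<in> borel \<Otimes>\<^sub>M borel \<rightarrow>\<^sub>M (borel :: real measure)"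
    by measurable
  then show "(\<lambda>(r, z). r + g * z) \<in> M \<Otimes>\<^sub>M E \<rightarrow>\<^sub>M borel"
    using assms by (simp add: measurable_cong_sets[OF sets_pair_measure_cong[OF assms(3,2)] refl])
  show "(\<lambda>x. E) \<in> M \<rightarrow>\<^sub>M subprob_algebra E"
    using assms by (intro measurable_const) (auto simp: space_subprob_algebra prob_space_imp_subprob_space)
qed

lemma prob_space_bind_shift:
  fixes E M :: "real measure"
  assumes "prob_space E" "sets E = sets borel" "prob_space M" "sets M = sets borel"
  shows "prob_space (M \<bind> (\<lambda>r. distr E borel (\<lambda>z. r + g * z)))"
    and "sets (M \<bind> (\<lambda>r. distr E borel (\<lambda>z. r + g * z))) = sets borel"
proof -
  note kernel = shift_kernel_measurable[OF assms(1,2,4)]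
  show "prob_space (M \<bind> (\<lambda>r. distr E borel (\<lambda>z. r + g * z)))"
    using assms(1,2)
    by (intro prob_space.prob_space_bind[OF assms(3) _ kernel] AE_I2 prob_space.prob_space_distr)
       (auto simp: measurable_cong_sets[OF assms(2) refl])
  show "sets (M \<bind> (\<lambda>r. distr E borel (\<lambda>z. r + g * z))) = sets borel"
    using prob_space.not_empty[OF assms(3)] by (simp add: sets_bind[OF sets_kernel[OF kernel]])
qed

lemma integral_bind_shift:
  fixes E M :: "real measure" and \<phi> :: "real \<Rightarrow> real"
  assumes "prob_space E" "sets E = sets borel" "prob_space M" "sets M = sets borel"
    and [measurable]: "\<phi> \<in> borel_measurable borel" and bounded: "\<And>w. \<bar>\<phi> w\<bar> \<le> B"
  shows "(\<integral>w. \<phi> w \<partial>(M \<bind> (\<lambda>r. distr E borel (\<lambda>z. r + g * z)))) = (\<integral>r. (\<integral>w. \<phi> (r + g * w) \<partial>E) \<partial>M)"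
proof -
  have "(\<integral>w. \<phi> w \<partial>(M \<bind> (\<lambda>r. distr E borel (\<lambda>z. r + g * z))))
      = (\<integral>r. (\<integral>w. \<phi> w \<partial>distr E borel (\<lambda>z. r + g * z)) \<partial>M)"
  proof (rule integral_bind[where B=B and B'=1])
    show "finite_measure M"
      using assms(3) unfolding prob_space_def by simp
    show "AE r in M. emeasure (distr E borel (\<lambda>z. r + g * z)) (space (distr E borel (\<lambda>z. r + g * z))) \<le> ennreal 1"
      using assms(1,2) by (auto intro!: AE_I2 simp: emeasure_distr measurable_cong_sets[OF assms(2) refl]
          prob_space.emeasure_space_1)
  qed (use shift_kernel_measurable[OF assms(1,2,4)] bounded in auto)
  also have "\<dots> = (\<integral>r. (\<integral>w. \<phi> (r + g * w) \<partial>E) \<partial>M)"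
    using assms(2) by (intro Bochner_Integration.integral_cong refl integral_distr)
       (auto simp: measurable_cong_sets[OF assms(2) refl])
  finally show ?thesis .
qed

lemma measurable_integral_shift:
  fixes E M :: "real measure" and f :: "real \<Rightarrow> real"
  assumes "prob_space E" "sets E = sets borel" "sets M = sets borel"
    and [measurable]: "f \<in> borel_measurable borel"
  shows "(\<lambda>r. \<integral>w. f (r + g * w) \<partial>E) \<in> borel_measurable M"
proof -
  interpret prob_space E by fact
  have "(\<lambda>(r, w). f (r + g * w)) \<in> borel_measurable (borel \<Otimes>\<^sub>M borel)"
    by measurable
  then have "(\<lambda>(r, w). f (r + g * w)) \<in> borel_measurable (M \<Otimes>\<^sub>M E)"
    by (simp add: measurable_cong_sets[OF sets_pair_measure_cong[OF assms(3,2)] refl])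
  then show ?thesis
    by (rule borel_measurable_lebesgue_integral)
qed

lemma integrable_integral_shift:
  fixes E M :: "real measure" and \<phi> :: "real \<Rightarrow> real"
  assumes "prob_space E" "sets E = sets borel" "prob_space M" "sets M = sets borel"
    and [measurable]: "\<phi> \<in> borel_measurable borel" and bounded: "\<And>w. \<bar>\<phi> w\<bar> \<le> B"
  shows "integrable M (\<lambda>r. \<integral>w. \<phi> (r + g * w) \<partial>E)"
proof -
  interpret M: prob_space M by fact
  have "\<bar>\<integral>w. \<phi> (r + g * w) \<partial>E\<bar> \<le> B" for r
    using bounded by (intro prob_space.abs_integral_le_const[OF assms(1)])
      (simp add: measurable_cong_sets[OF assms(2) refl])
  then show ?thesis
    by (intro M.integrable_const_bound[where B=B] AE_I2 measurable_integral_shift[OF assms(1,2,4,5)]) auto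
qed

lemma pmf_bind_pair:
  "pmf (bind_pmf P (\<lambda>x. map_pmf (\<lambda>a. (x, a)) (Q x))) (y, b) = pmf P y * pmf (Q y) b"
proof -
  have "pmf (map_pmf (\<lambda>a. (x, a)) (Q x)) (y, b) = indicator {y} x * pmf (Q y) b" for x
  proof (cases "x = y")
    case True
    then show ?thesis using pmf_map_inj'[of "\<lambda>a. (y, a)" "Q y" b] by (simp add: inj_def)
  qed (auto simp: pmf_eq_0_set_pmf)
  then have "pmf (bind_pmf P (\<lambda>x. map_pmf (\<lambda>a. (x, a)) (Q x))) (y, b)
      = (\<integral>x. indicator {y} x * pmf (Q y) b \<partial>measure_pmf P)"
    by (simp add: pmf_bind)
  also have "\<dots> = pmf P y * pmf (Q y) b"
    by (simp add: measure_pmf.emeasure_eq_measure pmf.rep_eq)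
  finally show ?thesis .
qed

lemma sum_pmf_pair_const:
  fixes P :: "'x::finite pmf" and Q :: "'x \<Rightarrow> 'a::finite pmf"
  shows "(\<Sum>x\<in>UNIV. \<Sum>a\<in>UNIV. pmf P x * pmf (Q x) a * c) = c"
  by (simp add: sum_distrib_left[symmetric] sum_distrib_right[symmetric] mult.assoc sum_pmf_eq_1)

context
  fixes p :: "'x::finite \<Rightarrow> 'a::finite \<Rightarrow> 'x pmf" and \<pi> :: "'x \<Rightarrow> 'a pmf"
    and R E :: "'x \<Rightarrow> 'a \<Rightarrow> real measure"
  assumes R: "\<And>x a. prob_space (R x a)" "\<And>x a. sets (R x a) = sets borel"
    and E: "\<And>x a. prob_space (E x a)" "\<And>x a. sets (E x a) = sets borel"
begin

lemma bellman_kernel: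
  fixes x :: 'x and a :: 'a and g :: real and s :: "'x \<times> 'a"
  defines "N \<equiv> \<lambda>(x', a'). R x a \<bind> (\<lambda>r. distr (E x' a') borel (\<lambda>z. r + g * z))"
  shows "prob_space (N s)" and "N s \<in> space (subprob_algebra borel)"
proof -
  obtain x' a' where s: "s = (x', a')" by (cases s)
  show "prob_space (N s)"
    unfolding N_def s using prob_space_bind_shift(1)[OF E(1,2) R(1,2)] by simp
  moreover have "sets (N s) = sets borel"
    unfolding N_def s using prob_space_bind_shift(2)[OF E(1,2) R(1,2)] by simp
  ultimately show "N s \<in> space (subprob_algebra borel)"
    by (simp add: space_subprob_algebra prob_space_imp_subprob_space)
qed

lemma prob_space_bellman_op: "prob_space (bellman_op p \<pi> R g E x a)"
  and sets_bellman_op: "sets (bellman_op p \<pi> R g E x a) = sets borel"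
proof -
  note kernel = bellman_kernel[of x a g]
  have measurable: "(\<lambda>(x', a'). R x a \<bind> (\<lambda>r. distr (E x' a') borel (\<lambda>z. r + g * z)))
      \<in> measure_pmf Q \<rightarrow>\<^sub>M subprob_algebra borel" for Q
    using kernel(2) by simp
  show "prob_space (bellman_op p \<pi> R g E x a)"
    unfolding bellman_op_def
    by (rule measure_pmf.prob_space_bind[OF _ measurable]) (use kernel(1) in auto)
  show "sets (bellman_op p \<pi> R g E x a) = sets borel"
    unfolding bellman_op_def using kernel(2) by (subst sets_bind) (auto simp: space_subprob_algebra)
qed

lemma integral_bellman_op:
  fixes \<phi> :: "real \<Rightarrow> real"
  assumes [measurable]: "\<phi> \<in> borel_measurable borel" and bounded: "\<And>w. \<bar>\<phi> w\<bar> \<le> B"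
  shows "(\<integral>w. \<phi> w \<partial>bellman_op p \<pi> R g E x a)
    = (\<Sum>x'\<in>UNIV. \<Sum>a'\<in>UNIV. pmf (p x a) x' * pmf (\<pi> x') a' * (\<integral>r. (\<integral>w. \<phi> (r + g * w) \<partial>E x' a') \<partial>R x a))"
proof -
  define Q where "Q = bind_pmf (p x a) (\<lambda>x'. map_pmf (\<lambda>a'. (x', a')) (\<pi> x'))"
  define N where "N = (\<lambda>(x', a'). R x a \<bind> (\<lambda>r. distr (E x' a') borel (\<lambda>z. r + g * z)))"
  have "(\<integral>w. \<phi> w \<partial>bellman_op p \<pi> R g E x a) = (\<integral>s. (\<integral>w. \<phi> w \<partial>N s) \<partial>measure_pmf Q)"
    unfolding bellman_op_def Q_def[symmetric] N_def[symmetric]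
  proof (rule integral_bind[where B=B and B'=1])
    show "N \<in> measure_pmf Q \<rightarrow>\<^sub>M subprob_algebra borel"
      using bellman_kernel(2) unfolding N_def by simp
    show "AE s in measure_pmf Q. emeasure (N s) (space (N s)) \<le> ennreal 1"
      using bellman_kernel(1) unfolding N_def by (simp add: prob_space.emeasure_space_1)
    show "finite_measure (measure_pmf Q)"
      by (simp add: measure_pmf.finite_measure_axioms)
  qed (use bounded in auto)
  also have "\<dots> = (\<Sum>x'\<in>UNIV. \<Sum>a'\<in>UNIV. (\<integral>w. \<phi> w \<partial>N (x', a')) * pmf Q (x', a'))"
    by (subst integral_measure_pmf_real[where A=UNIV])
       (auto simp: UNIV_Times_UNIV[symmetric] sum.cartesian_product simp del: UNIV_Times_UNIV)
  also have "\<dots> = (\<Sum>x'\<in>UNIV. \<Sum>a'\<in>UNIV. pmf (p x a) x' * pmf (\<pi> x') a' * (\<integral>r. (\<integral>w. \<phi> (r + g * w) \<partial>E x' a') \<partial>R x a))"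
    unfolding N_def Q_def pmf_bind_pair prod.case
    by (simp only: integral_bind_shift[OF E(1,2) R(1,2) assms(1) bounded]) (simp add: mult_ac)
  finally show ?thesis .
qed

lemma integral_bellman_op_cong:
  fixes \<phi> \<psi> :: "real \<Rightarrow> real"
  assumes [measurable]: "\<phi> \<in> borel_measurable borel" "\<psi> \<in> borel_measurable borel"
    and "\<And>w. \<bar>\<phi> w\<bar> \<le> B" "\<And>w. \<bar>\<psi> w\<bar> \<le> B"
    and eq: "\<And>u. u \<in> S \<Longrightarrow> \<phi> u = \<psi> u"
    and range: "\<And>x' a'. AE r in R x a. AE w in E x' a'. r + g * w \<in> S"
  shows "(\<integral>w. \<phi> w \<partial>bellman_op p \<pi> R g E x a) = (\<integral>w. \<psi> w \<partial>bellman_op p \<pi> R g E x a)"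
proof -
  have "(\<integral>r. (\<integral>w. \<phi> (r + g * w) \<partial>E x' a') \<partial>R x a) = (\<integral>r. (\<integral>w. \<psi> (r + g * w) \<partial>E x' a') \<partial>R x a)"
    for x' a'
  proof (intro integral_cong_AE measurable_integral_shift[OF E(1,2) R(2)] assms(1,2))
    show "AE r in R x a. (\<integral>w. \<phi> (r + g * w) \<partial>E x' a') = (\<integral>w. \<psi> (r + g * w) \<partial>E x' a')"
      using range[of x' a'] by eventually_elim
        (auto intro!: integral_cong_AE simp: eq measurable_cong_sets[OF E(2) refl] elim: eventually_mono)
  qed
  then show ?thesis
    unfolding integral_bellman_op[OF assms(1,3)] integral_bellman_op[OF assms(2,4)] by simp
qed

end

section \<open>The return distribution\<close>

lemma (in prob_space) integral_stream_space:
  fixes f :: "_ stream \<Rightarrow> real"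
  assumes [measurable]: "f \<in> borel_measurable (stream_space M)" and bounded: "\<And>x. \<bar>f x\<bar> \<le> B"
  shows "(\<integral>X. f X \<partial>stream_space M) = (\<integral>x. (\<integral>X. f (x ## X) \<partial>stream_space M) \<partial>M)"
proof -
  interpret S: sequence_space M ..
  interpret P: pair_sigma_finite M "\<Pi>\<^sub>M i::nat\<in>UNIV. M" ..
  interpret PP: prob_space "M \<Otimes>\<^sub>M (\<Pi>\<^sub>M i::nat\<in>UNIV. M)"
    by (intro prob_space_pair prob_space_axioms S.prob_space_axioms)
  have "(\<integral>X. f X \<partial>stream_space M) = (\<integral>X. f (to_stream X) \<partial>S.S)"
    by (subst stream_space_eq_distr) (simp add: integral_distr)
  also have "\<dots> = (\<integral>X. f (to_stream ((\<lambda>(s, \<omega>). case_nat s \<omega>) X)) \<partial>(M \<Otimes>\<^sub>M S.S))"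
    by (subst S.PiM_iter[symmetric]) (simp add: integral_distr)
  also have "\<dots> = (\<integral>x. \<integral>X. f (to_stream ((\<lambda>(s, \<omega>). case_nat s \<omega>) (x, X))) \<partial>S.S \<partial>M)"
    using bounded by (intro P.integral_fst'[symmetric] PP.integrable_const_bound[where B=B]) auto
  also have "\<dots> = (\<integral>x. \<integral>X. f (x ## to_stream X) \<partial>S.S \<partial>M)"
    by (auto intro!: Bochner_Integration.integral_cong simp: to_stream_nat_case)
  also have "\<dots> = (\<integral>x. \<integral>X. f (x ## X) \<partial>stream_space M \<partial>M)"
    by (subst stream_space_eq_distr) (simp add: integral_distr cong: Bochner_Integration.integral_cong)
  finally show ?thesis .
qed

lemma traj_Suc_Cons: "traj s (st ## \<omega>) (Suc t) = traj (traj s (st ## \<omega>) 1) \<omega> t"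
  by (induction t) (simp_all add: Let_def)

lemma reward_at_Suc_Cons: "reward_at s (st ## \<omega>) (Suc t) = reward_at (traj s (st ## \<omega>) 1) \<omega> t"
  unfolding reward_at_def traj_Suc_Cons by simp

definition rewards_bounded :: "real \<Rightarrow> ('x, 'a) step \<Rightarrow> bool" where
  "rewards_bounded c st \<longleftrightarrow> (\<forall>s. \<bar>snd (snd st) s\<bar> \<le> c)"

lemma abs_discounted_reward_le:
  assumes "stream_all (rewards_bounded c) \<omega>" "0 \<le> g"
  shows "\<bar>g ^ t * reward_at s \<omega> t\<bar> \<le> g ^ t * c"
proof -
  have "\<bar>reward_at s \<omega> t\<bar> \<le> c"
    using assms(1) unfolding stream_all_def rewards_bounded_def reward_at_def by blast
  moreover have "\<bar>g ^ t * reward_at s \<omega> t\<bar> = g ^ t * \<bar>reward_at s \<omega> t\<bar>"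
    using assms(2) by (simp add: abs_mult)
  ultimately show ?thesis
    using assms(2) by (simp add: mult_left_mono)
qed

lemma summable_discounted_rewards:
  assumes "stream_all (rewards_bounded c) \<omega>" "0 \<le> g" "g < 1"
  shows "summable (\<lambda>t. g ^ t * reward_at s \<omega> t)"
proof (rule summable_comparison_test')
  show "summable (\<lambda>t. g ^ t * c)"
    using assms(2,3) by (intro summable_mult2 summable_geometric) simp
  show "norm (g ^ t * reward_at s \<omega> t) \<le> g ^ t * c" for t
    using abs_discounted_reward_le[OF assms(1,2)] by simp
qed

lemma abs_disc_return_le:
  assumes "stream_all (rewards_bounded c) \<omega>" "0 \<le> g" "g < 1"
  shows "\<bar>disc_return g s \<omega>\<bar> \<le> c / (1 - g)"
proof -
  have geometric: "summable (\<lambda>t. g ^ t * c)" "(\<Sum>t. g ^ t * c) = c / (1 - g)"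
    using assms(2,3) by (auto simp: suminf_mult2[symmetric] suminf_geometric divide_simps intro!: summable_mult2)
  have summable_abs: "summable (\<lambda>t. \<bar>g ^ t * reward_at s \<omega> t\<bar>)"
    using geometric(1) by (rule summable_comparison_test') (simp add: abs_discounted_reward_le[OF assms(1,2)])
  have "\<bar>disc_return g s \<omega>\<bar> \<le> (\<Sum>t. \<bar>g ^ t * reward_at s \<omega> t\<bar>)"
    unfolding disc_return_def using summable_abs by (rule summable_rabs)
  also have "\<dots> \<le> (\<Sum>t. g ^ t * c)"
    by (intro suminf_le abs_discounted_reward_le[OF assms(1,2)] summable_abs geometric(1))
  finally show ?thesis
    using geometric(2) by simp
qed

lemma disc_return_Cons:
  assumes "stream_all (rewards_bounded c) (st ## \<omega>)" "0 \<le> g" "g < 1"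
  shows "disc_return g s (st ## \<omega>) = snd (snd st) s + g * disc_return g (traj s (st ## \<omega>) 1) \<omega>"
proof -
  have tail: "stream_all (rewards_bounded c) \<omega>"
    using assms(1) by (simp add: stream_all_Stream)
  have "disc_return g s (st ## \<omega>) = (\<Sum>t. g ^ Suc t * reward_at s (st ## \<omega>) (Suc t)) + reward_at s (st ## \<omega>) 0"
    unfolding disc_return_def suminf_split_head[OF summable_discounted_rewards[OF assms]] by simp
  also have "(\<Sum>t. g ^ Suc t * reward_at s (st ## \<omega>) (Suc t))
      = (\<Sum>t. g * (g ^ t * reward_at (traj s (st ## \<omega>) 1) \<omega> t))"
    unfolding reward_at_Suc_Cons by (simp add: mult_ac)
  also have "\<dots> = g * disc_return g (traj s (st ## \<omega>) 1) \<omega>"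
    unfolding disc_return_def by (rule suminf_mult[OF summable_discounted_rewards[OF tail assms(2,3)]])
  finally show ?thesis
    by (simp add: reward_at_def)
qed

locale bounded_reward_mdp =
  fixes p :: "'x::finite \<Rightarrow> 'a::finite \<Rightarrow> 'x pmf" and \<pi> :: "'x \<Rightarrow> 'a pmf"
    and R :: "'x \<Rightarrow> 'a \<Rightarrow> real measure" and Rmax :: real
  assumes prob_space_R: "\<And>x a. prob_space (R x a)"
    and sets_R: "\<And>x a. sets (R x a) = sets borel"
    and R_support: "\<And>x a. emeasure (R x a) {- Rmax..Rmax} = 1"
begin

abbreviation "next_prod \<equiv> PiM UNIV (\<lambda>s. measure_pmf (p (fst s) (snd s)))"
abbreviation "act_prod \<equiv> PiM UNIV (\<lambda>x. measure_pmf (\<pi> x))"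
abbreviation "rew_prod \<equiv> PiM UNIV (\<lambda>s. R (fst s) (snd s))"
abbreviation "step \<equiv> step_measure p \<pi> R"
abbreviation "paths \<equiv> stream_space step"

lemma step_eq: "step = next_prod \<Otimes>\<^sub>M (act_prod \<Otimes>\<^sub>M rew_prod)"
  unfolding step_measure_def ..

lemma prob_space_next_prod: "prob_space next_prod"
  and prob_space_act_prod: "prob_space act_prod"
  and prob_space_rew_prod: "prob_space rew_prod"
  by (auto intro!: prob_space_PiM simp: measure_pmf.prob_space_axioms prob_space_R)

sublocale step: prob_space step
  unfolding step_eq
  by (intro prob_space_pair prob_space_next_prod prob_space_act_prod prob_space_rew_prod)

lemma next_component_measurable: "(\<lambda>f. f s) \<in> next_prod \<rightarrow>\<^sub>M count_space UNIV"
  using measurable_component_singleton[of s UNIV "\<lambda>s. measure_pmf (p (fst s) (snd s))"] by simp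

lemma act_component_measurable: "(\<lambda>f. f x) \<in> act_prod \<rightarrow>\<^sub>M count_space UNIV"
  using measurable_component_singleton[of x UNIV "\<lambda>x. measure_pmf (\<pi> x)"] by simp

lemma rew_component_measurable: "(\<lambda>f. f s) \<in> borel_measurable rew_prod"
  using measurable_component_singleton[of s UNIV "\<lambda>s. R (fst s) (snd s)"]
  by (simp add: measurable_cong_sets[OF refl sets_R])

lemma traj_measurable: "(\<lambda>\<omega>. traj s \<omega> t) \<in> paths \<rightarrow>\<^sub>M count_space UNIV"
proof (induction t)
  case (Suc t)
  have snth: "(\<lambda>\<omega>. \<omega> !! t) \<in> paths \<rightarrow>\<^sub>M next_prod \<Otimes>\<^sub>M (act_prod \<Otimes>\<^sub>M rew_prod)"
    unfolding step_eq[symmetric] by (rule measurable_snth)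
  have next_state: "(\<lambda>\<omega>. fst (\<omega> !! t) s') \<in> paths \<rightarrow>\<^sub>M count_space UNIV" for s'
    using measurable_compose[OF measurable_compose[OF snth measurable_fst] next_component_measurable] .
  have action: "(\<lambda>\<omega>. (x, fst (snd (\<omega> !! t)) x)) \<in> paths \<rightarrow>\<^sub>M count_space UNIV" for x
  proof -
    have "(\<lambda>\<omega>. fst (snd (\<omega> !! t)) x) \<in> paths \<rightarrow>\<^sub>M count_space UNIV"
      using measurable_compose[OF measurable_compose[OF measurable_compose[OF snth measurable_snd] measurable_fst]
          act_component_measurable[of x]] .
    moreover have "Pair x \<in> count_space UNIV \<rightarrow>\<^sub>M count_space (UNIV :: ('x \<times> 'a) set)"
      by simp
    ultimately show ?thesis
      by (rule measurable_compose)
  qed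
  have "(\<lambda>\<omega>. fst (\<omega> !! t) (traj s \<omega> t)) \<in> paths \<rightarrow>\<^sub>M count_space UNIV"
    by (rule measurable_compose_countable'[OF next_state Suc]) simp
  then have "(\<lambda>\<omega>. (\<lambda>x \<omega>. (x, fst (snd (\<omega> !! t)) x)) (fst (\<omega> !! t) (traj s \<omega> t)) \<omega>) \<in> paths \<rightarrow>\<^sub>M count_space UNIV"
    by (rule measurable_compose_countable'[OF action]) simp
  then show ?case
    by (simp add: Let_def)
qed simp

lemma rew_measurable: "(\<lambda>\<omega>. snd (snd (\<omega> !! t)) s) \<in> borel_measurable paths"
proof -
  have "(\<lambda>\<omega>. snd (snd (\<omega> !! t))) \<in> paths \<rightarrow>\<^sub>M rew_prod"
    unfolding step_eq by (intro measurable_compose[OF measurable_snth] measurable_compose[OF measurable_snd]) simp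
  then show ?thesis
    using rew_component_measurable by (rule measurable_compose)
qed

lemma disc_return_measurable [measurable]: "disc_return g s \<in> borel_measurable paths"
proof -
  have "(\<lambda>\<omega>. reward_at s \<omega> t) \<in> borel_measurable paths" for t
    unfolding reward_at_def by (rule measurable_compose_countable'[OF rew_measurable traj_measurable]) simp
  then show ?thesis
    unfolding disc_return_def[abs_def] by measurable
qed

lemma AE_R_support: "AE r in R x a. r \<in> {- Rmax..Rmax}"
  by (rule prob_space.AE_in_set_of_emeasure_eq_1[OF prob_space_R]) (auto simp: sets_R R_support)

lemma AE_rewards_bounded: "AE st in step. rewards_bounded Rmax st"
proof -
  interpret act_rew: pair_sigma_finite act_prod rew_prod
    using prob_space_act_prod prob_space_rew_prod
    by (intro pair_sigma_finite.intro) (auto simp: prob_space_imp_sigma_finite)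
  interpret next_act_rew: pair_sigma_finite next_prod "act_prod \<Otimes>\<^sub>M rew_prod"
    using prob_space_next_prod prob_space_act_prod prob_space_rew_prod
    by (intro pair_sigma_finite.intro) (auto simp: prob_space_imp_sigma_finite prob_space_pair)
  note rew_component_measurable [measurable]
  have component: "AE c in rew_prod. c s \<in> {- Rmax..Rmax}" for s
    using AE_R_support[of "fst s" "snd s"]
    by (intro AE_PiM_component[where M="\<lambda>s. R (fst s) (snd s)", OF prob_space_R]) auto
  have "AE c in rew_prod. \<bar>c s\<bar> \<le> Rmax" for s
    using component[of s] by (rule eventually_mono) auto
  then have "AE c in rew_prod. \<forall>s. \<bar>c s\<bar> \<le> Rmax"
    by (simp only: AE_all_countable) blast
  then have "AE bc in act_prod \<Otimes>\<^sub>M rew_prod. \<forall>s. \<bar>snd bc s\<bar> \<le> Rmax"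
    by (intro act_rew.AE_pair_measure) (auto intro: AE_I2)
  then show ?thesis
    unfolding step_eq rewards_bounded_def by (intro next_act_rew.AE_pair_measure) (auto intro: AE_I2)
qed

lemma AE_paths_rewards_bounded: "AE \<omega> in paths. stream_all (rewards_bounded Rmax) \<omega>"
proof (rule step.AE_stream_all[OF _ AE_rewards_bounded])
  have "(\<lambda>st. snd (snd st) s) \<in> borel_measurable step" for s
    unfolding step_eq by (intro measurable_compose[OF measurable_snd] measurable_compose[OF measurable_snd]
        rew_component_measurable)
  then show "Measurable.pred step (rewards_bounded Rmax)"
    unfolding rewards_bounded_def by measurable
qed

lemma step_fun_measurable:
  fixes F :: "'x \<Rightarrow> 'a \<Rightarrow> real \<Rightarrow> real"
  assumes F: "\<And>x' a'. F x' a' \<in> borel_measurable borel"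
  shows "(\<lambda>bc. F x' (fst bc x') (snd bc s)) \<in> borel_measurable (act_prod \<Otimes>\<^sub>M rew_prod)"
    and "(\<lambda>st. F (fst st s) (fst (snd st) (fst st s)) (snd (snd st) s)) \<in> borel_measurable step"
proof -
  show act_rew: "(\<lambda>bc. F x' (fst bc x') (snd bc s)) \<in> borel_measurable (act_prod \<Otimes>\<^sub>M rew_prod)" for x'
  proof (rule measurable_compose_countable'[where f="\<lambda>a bc. F x' a (snd bc s)"])
    show "(\<lambda>bc. fst bc x') \<in> act_prod \<Otimes>\<^sub>M rew_prod \<rightarrow>\<^sub>M count_space UNIV"
      by (rule measurable_compose[OF measurable_fst act_component_measurable])
    show "(\<lambda>bc. F x' a (snd bc s)) \<in> borel_measurable (act_prod \<Otimes>\<^sub>M rew_prod)" for a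
      by (rule measurable_compose[OF measurable_snd measurable_compose[OF rew_component_measurable F]])
  qed simp
  show "(\<lambda>st. F (fst st s) (fst (snd st) (fst st s)) (snd (snd st) s)) \<in> borel_measurable step"
    unfolding step_eq
  proof (rule measurable_compose_countable'[where f="\<lambda>x' st. F x' (fst (snd st) x') (snd (snd st) s)"])
    show "(\<lambda>st. fst st s) \<in> next_prod \<Otimes>\<^sub>M (act_prod \<Otimes>\<^sub>M rew_prod) \<rightarrow>\<^sub>M count_space UNIV"
      by (rule measurable_compose[OF measurable_fst next_component_measurable])
    show "(\<lambda>st. F x' (fst (snd st) x') (snd (snd st) s)) \<in> borel_measurable (next_prod \<Otimes>\<^sub>M (act_prod \<Otimes>\<^sub>M rew_prod))"
      for x'
      by (rule measurable_compose[OF measurable_snd act_rew])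
  qed simp
qed

lemma integral_component:
  fixes M :: "'i \<Rightarrow> 'b measure" and f :: "'b \<Rightarrow> real"
  assumes "\<And>i. prob_space (M i)" and "f \<in> borel_measurable (M i)"
  shows "(\<integral>\<omega>. f (\<omega> i) \<partial>PiM UNIV M) = (\<integral>y. f y \<partial>M i)"
  using integral_distr[of "\<lambda>\<omega>. \<omega> i" "PiM UNIV M" "M i" f] distr_PiM_component[of UNIV M i] assms
  by (simp add: measurable_component_singleton)

lemma integral_step:
  fixes F :: "'x \<Rightarrow> 'a \<Rightarrow> real \<Rightarrow> real"
  assumes F: "\<And>x' a'. F x' a' \<in> borel_measurable borel" and bounded: "\<And>x' a' r. \<bar>F x' a' r\<bar> \<le> B"
  shows "(\<integral>st. F (fst st (x, a)) (fst (snd st) (fst st (x, a))) (snd (snd st) (x, a)) \<partial>step)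
    = (\<Sum>x'\<in>UNIV. \<Sum>a'\<in>UNIV. pmf (p x a) x' * pmf (\<pi> x') a' * (\<integral>r. F x' a' r \<partial>R x a))"
proof -
  let ?s = "(x, a)"
  interpret act_rew: pair_sigma_finite act_prod rew_prod
    using prob_space_act_prod prob_space_rew_prod
    by (intro pair_sigma_finite.intro) (auto simp: prob_space_imp_sigma_finite)
  interpret next_act_rew: pair_sigma_finite next_prod "act_prod \<Otimes>\<^sub>M rew_prod"
    using prob_space_next_prod prob_space_act_prod prob_space_rew_prod
    by (intro pair_sigma_finite.intro) (auto simp: prob_space_imp_sigma_finite prob_space_pair)
  interpret act_rew_prob: prob_space "act_prod \<Otimes>\<^sub>M rew_prod"
    using prob_space_act_prod prob_space_rew_prod by (rule prob_space_pair)
  define G where "G x' = (\<Sum>a'\<in>UNIV. pmf (\<pi> x') a' * (\<integral>r. F x' a' r \<partial>R x a))" for x'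
  have integrable: "integrable (next_prod \<Otimes>\<^sub>M (act_prod \<Otimes>\<^sub>M rew_prod))
      (\<lambda>st. F (fst st ?s) (fst (snd st) (fst st ?s)) (snd (snd st) ?s))"
    unfolding step_eq[symmetric]
    by (intro step.integrable_const_bound[where B=B] AE_I2 step_fun_measurable(2)[OF F]) (simp add: bounded)
  have "(\<integral>st. F (fst st ?s) (fst (snd st) (fst st ?s)) (snd (snd st) ?s) \<partial>step)
      = (\<integral>n. (\<integral>bc. F (n ?s) (fst bc (n ?s)) (snd bc ?s) \<partial>(act_prod \<Otimes>\<^sub>M rew_prod)) \<partial>next_prod)"
    unfolding step_eq using next_act_rew.integral_fst'[OF integrable] by simp
  also have "\<dots> = (\<integral>n. (\<integral>b. (\<integral>c. F (n ?s) (b (n ?s)) (c ?s) \<partial>rew_prod) \<partial>act_prod) \<partial>next_prod)"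
    using step_fun_measurable(1)[OF F] bounded
    by (simp add: act_rew.integral_fst'[symmetric] act_rew_prob.integrable_const_bound[where B=B])
  also have "\<dots> = (\<integral>n. (\<integral>b. (\<integral>r. F (n ?s) (b (n ?s)) r \<partial>R x a) \<partial>act_prod) \<partial>next_prod)"
    using integral_component[of "\<lambda>s. R (fst s) (snd s)"] prob_space_R F
    by (simp add: measurable_cong_sets[OF sets_R refl])
  also have "\<dots> = (\<integral>n. G (n ?s) \<partial>next_prod)"
  proof (intro Bochner_Integration.integral_cong refl)
    fix n :: "'x \<times> 'a \<Rightarrow> 'x"
    show "(\<integral>b. (\<integral>r. F (n ?s) (b (n ?s)) r \<partial>R x a) \<partial>act_prod) = G (n ?s)"
      using integral_component[of "\<lambda>x. measure_pmf (\<pi> x)" "\<lambda>a'. \<integral>r. F (n ?s) a' r \<partial>R x a" "n ?s"]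
      by (simp add: G_def measure_pmf.prob_space_axioms integral_measure_pmf_real[where A=UNIV] mult.commute)
  qed
  also have "\<dots> = (\<integral>x'. G x' \<partial>measure_pmf (p x a))"
    using integral_component[of "\<lambda>s. measure_pmf (p (fst s) (snd s))" G ?s]
    by (simp add: measure_pmf.prob_space_axioms)
  also have "\<dots> = (\<Sum>x'\<in>UNIV. pmf (p x a) x' * G x')"
    by (subst integral_measure_pmf_real[where A=UNIV]) (auto simp: mult.commute)
  finally show ?thesis
    by (simp add: G_def sum_distrib_left mult_ac)
qed

lemma prob_space_eta_pi: "prob_space (eta_pi p \<pi> R g x a)"
  and sets_eta_pi: "sets (eta_pi p \<pi> R g x a) = sets borel"
  unfolding eta_pi_def by (auto intro!: prob_space.prob_space_distr step.prob_space_stream_space)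

lemma AE_eta_pi_bounded:
  assumes "0 \<le> g" "g < 1"
  shows "AE w in eta_pi p \<pi> R g x a. \<bar>w\<bar> \<le> Rmax / (1 - g)"
proof -
  have "AE \<omega> in paths. \<bar>disc_return g (x, a) \<omega>\<bar> \<le> Rmax / (1 - g)"
    using AE_paths_rewards_bounded by eventually_elim (rule abs_disc_return_le[OF _ assms])
  then show ?thesis
    unfolding eta_pi_def by (subst AE_distr_iff) auto
qed

lemma integral_paths_Cons:
  fixes \<phi> :: "real \<Rightarrow> real"
  assumes [measurable]: "\<phi> \<in> borel_measurable borel" and "0 \<le> g" "g < 1"
    and st: "st \<in> space step" "rewards_bounded Rmax st"
  shows "(\<integral>\<omega>. \<phi> (disc_return g s (st ## \<omega>)) \<partial>paths)
    = (\<integral>w. \<phi> (snd (snd st) s + g * w) \<partial>eta_pi p \<pi> R g (fst st s) (fst (snd st) (fst st s)))"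
proof -
  let ?s' = "(fst st s, fst (snd st) (fst st s))"
  have "(\<integral>\<omega>. \<phi> (disc_return g s (st ## \<omega>)) \<partial>paths) = (\<integral>\<omega>. \<phi> (snd (snd st) s + g * disc_return g ?s' \<omega>) \<partial>paths)"
  proof (rule integral_cong_AE)
    show "AE \<omega> in paths. \<phi> (disc_return g s (st ## \<omega>)) = \<phi> (snd (snd st) s + g * disc_return g ?s' \<omega>)"
      using AE_paths_rewards_bounded
    proof eventually_elim
      case (elim \<omega>)
      then have "stream_all (rewards_bounded Rmax) (st ## \<omega>)"
        using st(2) by (simp add: stream_all_Stream)
      from disc_return_Cons[OF this assms(2,3)] show ?case
        by (simp add: Let_def)
    qed
  qed (use st(1) in measurable)
  also have "\<dots> = (\<integral>w. \<phi> (snd (snd st) s + g * w) \<partial>eta_pi p \<pi> R g (fst st s) (fst (snd st) (fst st s)))"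
    unfolding eta_pi_def by (subst integral_distr) auto
  finally show ?thesis .
qed

lemma integral_eta_pi:
  fixes \<phi> :: "real \<Rightarrow> real"
  assumes [measurable]: "\<phi> \<in> borel_measurable borel" and bounded: "\<And>w. \<bar>\<phi> w\<bar> \<le> B"
    and "0 \<le> g" "g < 1"
  shows "(\<integral>w. \<phi> w \<partial>eta_pi p \<pi> R g x a)
    = (\<Sum>x'\<in>UNIV. \<Sum>a'\<in>UNIV. pmf (p x a) x' * pmf (\<pi> x') a' * (\<integral>r. (\<integral>w. \<phi> (r + g * w) \<partial>eta_pi p \<pi> R g x' a') \<partial>R x a))"
proof -
  let ?s = "(x, a)"
  interpret paths: prob_space paths
    by (rule step.prob_space_stream_space)
  define F where "F x' a' r = (\<integral>w. \<phi> (r + g * w) \<partial>eta_pi p \<pi> R g x' a')" for x' a' r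
  have F_measurable: "F x' a' \<in> borel_measurable borel" for x' a'
    unfolding F_def[abs_def] by (rule measurable_integral_shift[OF prob_space_eta_pi sets_eta_pi]) auto
  have F_bounded: "\<bar>F x' a' r\<bar> \<le> B" for x' a' r
    unfolding F_def using bounded
    by (intro prob_space.abs_integral_le_const[OF prob_space_eta_pi])
       (auto simp: measurable_cong_sets[OF sets_eta_pi refl])
  have "(\<integral>w. \<phi> w \<partial>eta_pi p \<pi> R g x a) = (\<integral>\<omega>. \<phi> (disc_return g ?s \<omega>) \<partial>paths)"
    unfolding eta_pi_def by (rule integral_distr) auto
  also have "\<dots> = (\<integral>st. (\<integral>\<omega>. \<phi> (disc_return g ?s (st ## \<omega>)) \<partial>paths) \<partial>step)"
    using bounded by (intro step.integral_stream_space[where B=B]) auto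
  also have "\<dots> = (\<integral>st. F (fst st ?s) (fst (snd st) (fst st ?s)) (snd (snd st) ?s) \<partial>step)"
  proof (rule integral_cong_AE)
    show "(\<lambda>st. \<integral>\<omega>. \<phi> (disc_return g ?s (st ## \<omega>)) \<partial>paths) \<in> borel_measurable step"
      by measurable
    show "(\<lambda>st. F (fst st ?s) (fst (snd st) (fst st ?s)) (snd (snd st) ?s)) \<in> borel_measurable step"
      by (rule step_fun_measurable(2)[OF F_measurable])
    show "AE st in step. (\<integral>\<omega>. \<phi> (disc_return g ?s (st ## \<omega>)) \<partial>paths)
        = F (fst st ?s) (fst (snd st) (fst st ?s)) (snd (snd st) ?s)"
      using AE_space AE_rewards_bounded
      by eventually_elim (simp add: F_def integral_paths_Cons[OF _ assms(3,4)])
  qed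
  also have "\<dots> = (\<Sum>x'\<in>UNIV. \<Sum>a'\<in>UNIV. pmf (p x a) x' * pmf (\<pi> x') a' * (\<integral>r. F x' a' r \<partial>R x a))"
    by (rule integral_step[OF F_measurable F_bounded])
  finally show ?thesis
    unfolding F_def .
qed

lemma eta_pi_bellman_fixed_point:
  assumes "0 \<le> g" "g < 1"
  shows "eta_pi p \<pi> R g x a = bellman_op p \<pi> R g (eta_pi p \<pi> R g) x a"
proof (rule measure_eqI)
  note bellman = prob_space_bellman_op[where E="eta_pi p \<pi> R g" and R=R and p=p and \<pi>=\<pi>, OF prob_space_R sets_R prob_space_eta_pi sets_eta_pi]
    sets_bellman_op[where E="eta_pi p \<pi> R g" and R=R and p=p and \<pi>=\<pi>, OF prob_space_R sets_R prob_space_eta_pi sets_eta_pi]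
    integral_bellman_op[where E="eta_pi p \<pi> R g" and R=R and p=p and \<pi>=\<pi>, OF prob_space_R sets_R prob_space_eta_pi sets_eta_pi]
  show "sets (eta_pi p \<pi> R g x a) = sets (bellman_op p \<pi> R g (eta_pi p \<pi> R g) x a)"
    by (simp add: sets_eta_pi bellman(2))
  fix A
  assume "A \<in> sets (eta_pi p \<pi> R g x a)"
  then have A [measurable]: "A \<in> sets borel"
    by (simp add: sets_eta_pi)
  have integral_eq: "(\<integral>w. indicator A w \<partial>eta_pi p \<pi> R g x a)
      = (\<integral>w. indicator A w \<partial>bellman_op p \<pi> R g (eta_pi p \<pi> R g) x a :: real)"
  proof -
    have ind: "(indicator A :: real \<Rightarrow> real) \<in> borel_measurable borel" "\<And>w. \<bar>indicator A w :: real\<bar> \<le> 1"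
      by (auto simp: indicator_def)
    show ?thesis
      unfolding integral_eta_pi[OF ind assms] bellman(3)[OF ind] ..
  qed
  interpret eta_pi: prob_space "eta_pi p \<pi> R g x a"
    by (rule prob_space_eta_pi)
  interpret bellman: prob_space "bellman_op p \<pi> R g (eta_pi p \<pi> R g) x a"
    by (rule bellman(1))
  show "emeasure (eta_pi p \<pi> R g x a) A = emeasure (bellman_op p \<pi> R g (eta_pi p \<pi> R g) x a) A"
    using integral_eq sets_eq_imp_space_eq[OF sets_eta_pi] sets_eq_imp_space_eq[OF bellman(2)]
    by (simp add: eta_pi.emeasure_eq_measure bellman.emeasure_eq_measure)
qed

end

section \<open>The Cramer grid\<close>

locale cramer_grid =
  fixes \<gamma> Rmax :: real and K :: nat
  assumes gamma_nonneg: "0 \<le> \<gamma>" and gamma_less_1: "\<gamma> < 1" and Rmax_pos: "0 < Rmax" and K_ge_2: "2 \<le> K"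
begin

abbreviation z :: "nat \<Rightarrow> real" where
  "z \<equiv> zgrid \<gamma> Rmax K"

definition zmax :: real where
  "zmax = Rmax / (1 - \<gamma>)"

definition spacing :: real where
  "spacing = 2 * zmax / (real K - 1)"

(* Affine coordinate in which the grid point z k sits at k - 1 and the grid spans [0, K - 1]. *)
definition coord :: "real \<Rightarrow> real" where
  "coord w = (w + zmax) / spacing"

lemma zmax_pos: "0 < zmax"
  using gamma_less_1 Rmax_pos unfolding zmax_def by simp

lemma spacing_pos: "0 < spacing"
  using zmax_pos K_ge_2 unfolding spacing_def by simp

lemma zgrid_eq: "z k = - zmax + (real k - 1) * spacing"
  unfolding zgrid_def zmax_def spacing_def by simp

lemma coord_zgrid [simp]: "coord (z k) = real k - 1"
  using spacing_pos unfolding coord_def zgrid_eq by simp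

lemma coord_le_iff: "coord u \<le> coord v \<longleftrightarrow> u \<le> v"
  using spacing_pos unfolding coord_def by (simp add: divide_le_cancel)

lemma coord_less_iff: "coord u < coord v \<longleftrightarrow> u < v"
  using spacing_pos unfolding coord_def by (simp add: divide_less_cancel)

lemma coord_measurable [measurable]: "coord \<in> borel_measurable borel"
  unfolding coord_def[abs_def] by measurable

lemma coord_affine: "coord (r + \<gamma> * w) = \<gamma> * coord w + (r + zmax - \<gamma> * zmax) / spacing"
  using spacing_pos unfolding coord_def by (simp add: field_simps)

lemma zgrid_1: "z 1 = - zmax"
  by (simp add: zgrid_eq)

lemma zgrid_K: "z K = zmax"
  using K_ge_2 unfolding zgrid_eq spacing_def by (simp add: field_simps)

lemma coord_neg_zmax: "coord (- zmax) = 0"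
  and coord_zmax: "coord zmax = real K - 1"
  using coord_zgrid[of 1] coord_zgrid[of K] by (simp_all only: zgrid_1 zgrid_K)

lemma coord_range_iff: "0 \<le> coord w \<and> coord w \<le> real K - 1 \<longleftrightarrow> w \<in> {- zmax..zmax}"
  using coord_le_iff[of "- zmax" w] coord_le_iff[of w zmax] by (auto simp: coord_neg_zmax coord_zmax)

lemma hfun_eq_clip: "hfun (z k) (z (Suc k)) w = clip (real k - coord w)"
proof -
  have "w \<le> z k \<longleftrightarrow> coord w \<le> real k - 1" "z (Suc k) \<le> w \<longleftrightarrow> real k \<le> coord w"
    using coord_le_iff[of w "z k"] coord_le_iff[of "z (Suc k)" w] by simp_all
  moreover have "(z (Suc k) - w) / (z (Suc k) - z k) = real k - coord w"
    using spacing_pos unfolding zgrid_eq coord_def by (simp add: field_simps)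
  ultimately show ?thesis
    unfolding hfun_def by (auto simp: clip_def)
qed

lemma s_stat_eq: "s_stat z k \<mu> = (\<integral>w. clip (real k - coord w) \<partial>\<mu>)"
  unfolding s_stat_def hfun_eq_clip ..

lemma shift_in_range:
  assumes "r \<in> {- Rmax..Rmax}" "w \<in> {- zmax..zmax}"
  shows "r + \<gamma> * w \<in> {- zmax..zmax}"
proof -
  have "\<bar>\<gamma> * w\<bar> \<le> \<gamma> * zmax"
    using assms(2) gamma_nonneg by (auto simp: abs_mult intro!: mult_left_mono)
  then have "\<bar>r + \<gamma> * w\<bar> \<le> Rmax + \<gamma> * zmax"
    using assms(1) by (simp add: abs_le_iff)
  also have "\<dots> = zmax"
    using gamma_less_1 unfolding zmax_def by (simp add: field_simps)
  finally show ?thesis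
    by auto
qed

lemma cramer_dirac_pmf_interior:
  assumes "- zmax < u" "u < zmax"
  obtains k where "1 \<le> k" "k < K" "real k - 1 \<le> coord u" "coord u \<le> real k"
    and "cramer_dirac_pmf z K u = map_pmf (\<lambda>b. if b then z (Suc k) else z k) (bernoulli_pmf (coord u - (real k - 1)))"
proof -
  define k where "k = (GREATEST k. k < K \<and> z k \<le> u)"
  have exists: "1 < K \<and> z 1 \<le> u" and bounded: "\<And>k. k < K \<and> z k \<le> u \<Longrightarrow> k \<le> K"
    using assms K_ge_2 zgrid_1 by auto
  have k: "k < K" "z k \<le> u"
    using GreatestI_nat[where P="\<lambda>k. k < K \<and> z k \<le> u", OF exists bounded] unfolding k_def by auto
  have "1 \<le> k"
    unfolding k_def by (rule Greatest_le_nat[where P="\<lambda>k. k < K \<and> z k \<le> u", OF exists bounded])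
  have "u < z (Suc k)"
  proof (rule ccontr)
    assume "\<not> u < z (Suc k)"
    moreover have "Suc k \<noteq> K"
      using assms(2) \<open>\<not> u < z (Suc k)\<close> zgrid_K by auto
    ultimately have "Suc k \<le> k"
      using k(1) unfolding k_def
      by (intro Greatest_le_nat[where P="\<lambda>k. k < K \<and> z k \<le> u", OF _ bounded]) (auto simp: k_def)
    then show False by simp
  qed
  have "(u - z k) / (z (Suc k) - z k) = coord u - (real k - 1)"
    using spacing_pos unfolding zgrid_eq coord_def by (simp add: field_simps)
  then have "cramer_dirac_pmf z K u = map_pmf (\<lambda>b. if b then z (Suc k) else z k) (bernoulli_pmf (coord u - (real k - 1)))"
    using assms unfolding cramer_dirac_pmf_def zgrid_1 zgrid_K k_def[symmetric] by (simp add: Let_def)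
  moreover have "real k - 1 \<le> coord u" "coord u \<le> real k"
    using k(2) \<open>u < z (Suc k)\<close> coord_le_iff[of "z k" u] coord_less_iff[of u "z (Suc k)"] by auto
  ultimately show ?thesis
    using that \<open>1 \<le> k\<close> k(1) by blast
qed

definition cramer_kernel :: "real \<Rightarrow> real measure" where
  "cramer_kernel u = distr (measure_pmf (cramer_dirac_pmf z K u)) borel id"

lemma prob_space_cramer_kernel: "prob_space (cramer_kernel u)"
  and sets_cramer_kernel: "sets (cramer_kernel u) = sets borel"
  unfolding cramer_kernel_def by (auto intro: measure_pmf.prob_space_distr)

lemma integral_cramer_kernel_clip:
  assumes "u \<in> {- zmax..zmax}"
  shows "(\<integral>w. clip (real j - coord w) \<partial>cramer_kernel u) = clip (real j - coord u)"
proof -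
  have "(\<integral>w. clip (real j - coord w) \<partial>cramer_kernel u) = (\<integral>w. clip (real j - coord w) \<partial>cramer_dirac_pmf z K u)"
    unfolding cramer_kernel_def by (subst integral_distr) auto
  also have "\<dots> = clip (real j - coord u)"
  proof (cases "u = - zmax \<or> u = zmax")
    case True
    then show ?thesis
      using zmax_pos unfolding cramer_dirac_pmf_def zgrid_1 zgrid_K by (auto simp: integral_return)
  next
    case False
    then have "- zmax < u" "u < zmax"
      using assms by auto
    then obtain k where k: "real k - 1 \<le> coord u" "coord u \<le> real k"
      and pmf: "cramer_dirac_pmf z K u = map_pmf (\<lambda>b. if b then z (Suc k) else z k) (bernoulli_pmf (coord u - (real k - 1)))"
      by (rule cramer_dirac_pmf_interior)
    have "real j - real k \<in> \<int>"
      by simp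
    from clip_affine_on_unit_interval[OF this, of "real j - coord u"] k
    show ?thesis
      unfolding pmf using k by (simp add: algebra_simps)
  qed
  finally show ?thesis .
qed

(* The tent function giving the mass that the projection of a Dirac measure at u puts on z j. *)
definition cramer_weight :: "nat \<Rightarrow> real \<Rightarrow> real" where
  "cramer_weight j u = max 0 (1 - \<bar>max 0 (min (real K - 1) (coord u)) - (real j - 1)\<bar>)"

lemma cramer_weight_measurable [measurable]: "cramer_weight j \<in> borel_measurable borel"
  unfolding cramer_weight_def[abs_def] by measurable

lemma sum_weighted_indicator_single:
  assumes "i \<in> {1..K}" "\<And>j. j \<in> {1..K} - {i} \<Longrightarrow> cramer_weight j u = 0" "cramer_weight i u = 1"
  shows "(\<Sum>j\<in>{1..K}. ennreal (cramer_weight j u) * indicator A (z j)) = indicator A (z i)"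
  using assms by (subst sum.remove[of _ i]) (auto intro!: sum.neutral)

lemma emeasure_cramer_kernel:
  assumes "A \<in> sets borel"
  shows "emeasure (cramer_kernel u) A = (\<Sum>j\<in>{1..K}. ennreal (cramer_weight j u) * indicator A (z j))"
proof -
  have "emeasure (cramer_kernel u) A = emeasure (measure_pmf (cramer_dirac_pmf z K u)) A"
    unfolding cramer_kernel_def using assms by (subst emeasure_distr) auto
  also have "\<dots> = (\<Sum>j\<in>{1..K}. ennreal (cramer_weight j u) * indicator A (z j))"
  proof -
    consider "u \<le> - zmax" | "zmax \<le> u" | "- zmax < u" "u < zmax"
      by linarith
    then show ?thesis
    proof cases
      case 1
      then have "coord u \<le> 0"
        using coord_le_iff[of u "- zmax"] by (simp add: coord_neg_zmax)
      then show ?thesis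
        using 1 K_ge_2 unfolding cramer_dirac_pmf_def zgrid_1
        by (subst sum_weighted_indicator_single[of 1]) (auto simp: cramer_weight_def zgrid_1[unfolded One_nat_def])
    next
      case 2
      then have "real K - 1 \<le> coord u"
        using coord_le_iff[of zmax u] by (simp add: coord_zmax)
      then show ?thesis
        using 2 zmax_pos K_ge_2 unfolding cramer_dirac_pmf_def zgrid_1 zgrid_K
        by (subst sum_weighted_indicator_single[of K]) (auto simp: cramer_weight_def zgrid_K)
    next
      case 3
      then obtain k where k: "1 \<le> k" "k < K" "real k - 1 \<le> coord u" "coord u \<le> real k"
        and pmf: "cramer_dirac_pmf z K u = map_pmf (\<lambda>b. if b then z (Suc k) else z k) (bernoulli_pmf (coord u - (real k - 1)))"
        by (rule cramer_dirac_pmf_interior)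
      have weights: "cramer_weight k u = real k - coord u" "cramer_weight (Suc k) u = coord u - (real k - 1)"
        "\<And>j. j \<in> {1..K} - {k, Suc k} \<Longrightarrow> cramer_weight j u = 0"
        using k unfolding cramer_weight_def by (auto simp: max_def min_def abs_if)
      have "emeasure (measure_pmf (cramer_dirac_pmf z K u)) A
          = ennreal (cramer_weight k u) * indicator A (z k) + ennreal (cramer_weight (Suc k) u) * indicator A (z (Suc k))"
        unfolding pmf weights using k
        by (simp add: nn_integral_indicator[symmetric] algebra_simps del: nn_integral_indicator split: split_indicator)
      also have "\<dots> = (\<Sum>j\<in>{k, Suc k}. ennreal (cramer_weight j u) * indicator A (z j))"
        by (simp del: sum_mult_indicator)
      also have "\<dots> = (\<Sum>j\<in>{1..K}. ennreal (cramer_weight j u) * indicator A (z j))"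
        using k weights(3) by (intro sum.mono_neutral_left) auto
      finally show ?thesis .
    qed
  qed
  finally show ?thesis .
qed

lemma cramer_kernel_measurable: "cramer_kernel \<in> borel \<rightarrow>\<^sub>M subprob_algebra borel"
proof (rule measurable_subprob_algebra)
  show "subprob_space (cramer_kernel u)" for u
    by (rule prob_space_imp_subprob_space[OF prob_space_cramer_kernel])
  show "sets (cramer_kernel u) = sets borel" for u
    by (rule sets_cramer_kernel)
  show "(\<lambda>u. emeasure (cramer_kernel u) A) \<in> borel_measurable borel" if "A \<in> sets borel" for A
    unfolding emeasure_cramer_kernel[OF that] by measurable
qed

lemma integral_cramer_kernel_clip_comb:
  assumes "u \<in> {- zmax..zmax}"
  shows "(\<integral>w. clip_comb e n (coord w) \<partial>cramer_kernel u) = clip_comb e n (coord u)"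
  using prob_space.integral_clip_comb[OF prob_space_cramer_kernel, of coord]
  by (simp add: measurable_cong_sets[OF sets_cramer_kernel refl] integral_cramer_kernel_clip[OF assms]
      clip_comb_def)

lemma integral_cramer_proj:
  fixes \<phi> :: "real \<Rightarrow> real"
  assumes "prob_space \<mu>" "sets \<mu> = sets borel"
    and [measurable]: "\<phi> \<in> borel_measurable borel" and bounded: "\<And>w. \<bar>\<phi> w\<bar> \<le> B"
  shows "(\<integral>w. \<phi> w \<partial>cramer_proj z K \<mu>) = (\<integral>u. (\<integral>w. \<phi> w \<partial>cramer_kernel u) \<partial>\<mu>)"
  unfolding cramer_proj_def cramer_kernel_def
proof (rule integral_bind[where B=B and B'=1])
  show "(\<lambda>u. distr (measure_pmf (cramer_dirac_pmf z K u)) borel id) \<in> \<mu> \<rightarrow>\<^sub>M subprob_algebra borel"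
    using cramer_kernel_measurable unfolding cramer_kernel_def[abs_def]
    by (simp add: measurable_cong_sets[OF assms(2) refl])
  show "finite_measure \<mu>"
    using assms(1) unfolding prob_space_def by simp
qed (use bounded in \<open>auto simp: emeasure_distr measure_pmf.emeasure_space_1\<close>)

end

section \<open>The CDRL fixed point\<close>

locale cdrl_fixed_point = cramer_grid \<gamma> Rmax K + bounded_reward_mdp p \<pi> R Rmax
  for \<gamma> Rmax :: real and K :: nat
    and p :: "'x::finite \<Rightarrow> 'a::finite \<Rightarrow> 'x pmf" and \<pi> :: "'x \<Rightarrow> 'a pmf" and R :: "'x \<Rightarrow> 'a \<Rightarrow> real measure" +
  fixes \<eta> :: "'x \<Rightarrow> 'a \<Rightarrow> real measure"
  assumes prob_space_eta: "\<And>x a. prob_space (\<eta> x a)"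
    and sets_eta: "\<And>x a. sets (\<eta> x a) = sets borel"
    and eta_support: "\<And>x a. emeasure (\<eta> x a) (z ` {1..K}) = 1"
    and eta_fixed_point: "\<And>x a. \<eta> x a = cramer_proj z K (bellman_op p \<pi> R \<gamma> \<eta> x a)"
begin

abbreviation "\<eta>\<^sub>\<pi> \<equiv> eta_pi p \<pi> R \<gamma>"

(* Both forms are needed: the simplifier normalises K - 1 to K - Suc 0 inside some terms. *)
lemma real_K_minus_1 [simp]: "real (K - 1) = real K - 1" "real (K - Suc 0) = real K - 1"
  using K_ge_2 by simp_all

lemma AE_eta_on_nodes: "AE w in \<eta> x a. \<exists>m\<le>K - 1. coord w = real m"
proof -
  have "z ` {1..K} \<in> sets (\<eta> x a)"
    unfolding sets_eta by (intro borel_closed finite_imp_closed) auto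
  then have "AE w in \<eta> x a. w \<in> z ` {1..K}"
    by (rule prob_space.AE_in_set_of_emeasure_eq_1[OF prob_space_eta _ eta_support])
  then show ?thesis
  proof (rule eventually_mono)
    fix w
    assume "w \<in> z ` {1..K}"
    then obtain j where "j \<in> {1..K}" "w = z j"
      by auto
    then show "\<exists>m\<le>K - 1. coord w = real m"
      by (intro exI[of _ "j - 1"]) auto
  qed
qed

lemma AE_eta_in_range: "AE w in \<eta> x a. w \<in> {- zmax..zmax}"
  using AE_eta_on_nodes
proof (rule eventually_mono)
  fix w
  assume "\<exists>m\<le>K - 1. coord w = real m"
  then have "0 \<le> coord w \<and> coord w \<le> real K - 1"
    using K_ge_2 by (auto simp: le_diff_conv2)
  then show "w \<in> {- zmax..zmax}"
    by (simp add: coord_range_iff)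
qed

lemma AE_eta_pi_in_range: "AE w in \<eta>\<^sub>\<pi> x a. 0 \<le> coord w \<and> coord w \<le> real (K - 1)"
  using AE_eta_pi_bounded[OF gamma_nonneg gamma_less_1]
  by (rule eventually_mono) (simp add: coord_range_iff zmax_def abs_le_iff)

lemma integral_eta_eq_bellman:
  assumes "\<And>k. \<bar>e k\<bar> \<le> 1"
  shows "(\<integral>w. clip_comb e (K - 1) (coord w) \<partial>\<eta> x a)
    = (\<integral>w. clip_comb e (K - 1) (coord w) \<partial>bellman_op p \<pi> R \<gamma> \<eta> x a)"
proof -
  define \<phi> where "\<phi> w = clip_comb e (K - 1) (coord w)" for w
  define \<psi> where "\<psi> u = (\<integral>w. \<phi> w \<partial>cramer_kernel u)" for u
  have [measurable]: "\<phi> \<in> borel_measurable borel"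
    unfolding \<phi>_def by measurable
  have \<phi>_bounded: "\<bar>\<phi> w\<bar> \<le> real (K - 1)" for w
    unfolding \<phi>_def using abs_clip_comb_le[of e 1 "K - 1" "coord w", OF assms] by simp
  have [measurable]: "\<psi> \<in> borel_measurable borel"
    unfolding \<psi>_def[abs_def]
    by (rule measurable_compose[OF cramer_kernel_measurable integral_measurable_subprob_algebra]) simp
  have \<psi>_bounded: "\<bar>\<psi> u\<bar> \<le> real (K - 1)" for u
    unfolding \<psi>_def using \<phi>_bounded
    by (intro prob_space.abs_integral_le_const[OF prob_space_cramer_kernel])
       (simp add: measurable_cong_sets[OF sets_cramer_kernel refl])
  have "(\<integral>w. \<phi> w \<partial>\<eta> x a) = (\<integral>u. \<psi> u \<partial>bellman_op p \<pi> R \<gamma> \<eta> x a)"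
    unfolding \<psi>_def using \<phi>_bounded
    by (subst eta_fixed_point) (intro integral_cramer_proj prob_space_bellman_op sets_bellman_op
        prob_space_R sets_R prob_space_eta sets_eta; simp)
  also have "\<dots> = (\<integral>u. \<phi> u \<partial>bellman_op p \<pi> R \<gamma> \<eta> x a)"
  proof (rule integral_bellman_op_cong[OF prob_space_R sets_R prob_space_eta sets_eta])
    show "\<psi> u = \<phi> u" if "u \<in> {- zmax..zmax}" for u
      unfolding \<psi>_def \<phi>_def using that by (rule integral_cramer_kernel_clip_comb)
    show "AE r in R x a. AE w in \<eta> x' a'. r + \<gamma> * w \<in> {- zmax..zmax}" for x' a'
      using AE_R_support
    proof (rule eventually_mono)
      fix r
      assume r: "r \<in> {- Rmax..Rmax}"
      show "AE w in \<eta> x' a'. r + \<gamma> * w \<in> {- zmax..zmax}"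
        using AE_eta_in_range by (rule eventually_mono) (rule shift_in_range[OF r])
    qed
  qed (use \<phi>_bounded \<psi>_bounded in auto)
  finally show ?thesis
    unfolding \<phi>_def .
qed

definition stat_gap :: "'x \<times> 'a \<Rightarrow> real" where
  "stat_gap s = (\<Sum>k=1..K - 1. \<bar>s_stat z k (\<eta>\<^sub>\<pi> (fst s) (snd s)) - s_stat z k (\<eta> (fst s) (snd s))\<bar>)"

lemma shifted_clip_comb_gap_le:
  assumes "\<And>k. \<bar>e k\<bar> \<le> 1"
  shows "(\<integral>w. clip_comb e (K - 1) (coord (r + \<gamma> * w)) \<partial>\<eta>\<^sub>\<pi> x a)
      - (\<integral>w. clip_comb e (K - 1) (coord (r + \<gamma> * w)) \<partial>\<eta> x a)
    \<le> \<gamma> / 2 + \<gamma> * stat_gap (x, a)"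
proof -
  define b where "b = (r + zmax - \<gamma> * zmax) / spacing"
  define f where "f y = clip_comb e (K - 1) (\<gamma> * y + b)" for y
  have lipschitz: "\<bar>f u - f v\<bar> \<le> \<gamma> * \<bar>u - v\<bar>" for u v
    using clip_comb_lipschitz[of e "K - 1" "\<gamma> * u + b" "\<gamma> * v + b", OF assms] gamma_nonneg
    by (simp add: f_def abs_mult right_diff_distrib[symmetric])
  have bounded: "\<bar>f y\<bar> \<le> real (K - 1)" for y
    using abs_clip_comb_le[of e 1 "K - 1" "\<gamma> * y + b", OF assms] by (simp add: f_def)
  have "(\<integral>w. clip_comb e (K - 1) (coord (r + \<gamma> * w)) \<partial>\<eta>\<^sub>\<pi> x a)
      - (\<integral>w. clip_comb e (K - 1) (coord (r + \<gamma> * w)) \<partial>\<eta> x a)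
      = (\<integral>w. f (coord w) \<partial>\<eta>\<^sub>\<pi> x a) - (\<integral>w. f (coord w) \<partial>\<eta> x a)"
    unfolding f_def b_def coord_affine ..
  also have "\<dots> \<le> \<gamma> / 2 + \<gamma> * (\<Sum>k=1..K - 1.
      \<bar>(\<integral>w. clip (real k - coord w) \<partial>\<eta>\<^sub>\<pi> x a) - (\<integral>w. clip (real k - coord w) \<partial>\<eta> x a)\<bar>)"
    using K_ge_2 bounded lipschitz AE_eta_pi_in_range AE_eta_on_nodes
    by (intro integral_lipschitz_diff_le_ramp_stats prob_space_eta_pi prob_space_eta)
       (auto simp: measurable_cong_sets[OF sets_eta_pi refl] measurable_cong_sets[OF sets_eta refl] f_def)
  also have "\<dots> = \<gamma> / 2 + \<gamma> * stat_gap (x, a)"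
    by (simp add: stat_gap_def s_stat_eq)
  finally show ?thesis .
qed

lemma bellman_clip_comb_gap_le:
  assumes e: "\<And>k. \<bar>e k\<bar> \<le> 1" and M: "\<And>s. stat_gap s \<le> M"
  shows "(\<integral>w. clip_comb e (K - 1) (coord w) \<partial>bellman_op p \<pi> R \<gamma> \<eta>\<^sub>\<pi> x a)
      - (\<integral>w. clip_comb e (K - 1) (coord w) \<partial>bellman_op p \<pi> R \<gamma> \<eta> x a)
    \<le> \<gamma> / 2 + \<gamma> * M"
proof -
  define \<phi> where "\<phi> w = clip_comb e (K - 1) (coord w)" for w
  define A where "A E x' a' r = (\<integral>w. \<phi> (r + \<gamma> * w) \<partial>E x' a')" for E :: "'x \<Rightarrow> 'a \<Rightarrow> real measure" and x' a' r
  have \<phi>_measurable [measurable]: "\<phi> \<in> borel_measurable borel"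
    unfolding \<phi>_def by measurable
  have \<phi>_bounded: "\<bar>\<phi> w\<bar> \<le> real (K - 1)" for w
    unfolding \<phi>_def using abs_clip_comb_le[of e 1 "K - 1" "coord w", OF e] by simp
  have integrable_A: "integrable (R x a) (A E x' a')"
    if "\<And>x a. prob_space (E x a)" "\<And>x a. sets (E x a) = sets borel" for E x' a'
    unfolding A_def[abs_def] using \<phi>_bounded
    by (intro integrable_integral_shift that prob_space_R sets_R \<phi>_measurable)
  have gap: "(\<integral>r. A \<eta>\<^sub>\<pi> x' a' r \<partial>R x a) - (\<integral>r. A \<eta> x' a' r \<partial>R x a) \<le> \<gamma> / 2 + \<gamma> * M" for x' a'
  proof -
    have "(\<integral>r. A \<eta>\<^sub>\<pi> x' a' r \<partial>R x a) - (\<integral>r. A \<eta> x' a' r \<partial>R x a) = (\<integral>r. A \<eta>\<^sub>\<pi> x' a' r - A \<eta> x' a' r \<partial>R x a)"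
      using integrable_A[OF prob_space_eta_pi sets_eta_pi] integrable_A[OF prob_space_eta sets_eta] by simp
    also have "\<dots> \<le> \<gamma> / 2 + \<gamma> * M"
    proof (intro prob_space.integral_le_const[OF prob_space_R] AE_I2)
      show "integrable (R x a) (\<lambda>r. A \<eta>\<^sub>\<pi> x' a' r - A \<eta> x' a' r)"
        using integrable_A[OF prob_space_eta_pi sets_eta_pi] integrable_A[OF prob_space_eta sets_eta] by simp
      show "A \<eta>\<^sub>\<pi> x' a' r - A \<eta> x' a' r \<le> \<gamma> / 2 + \<gamma> * M" for r
        using shifted_clip_comb_gap_le[where e=e and r=r and x=x' and a=a', OF e] mult_left_mono[OF M gamma_nonneg, of "(x', a')"]
        unfolding A_def \<phi>_def by linarith
    qed
    finally show ?thesis .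
  qed
  have "(\<integral>w. \<phi> w \<partial>bellman_op p \<pi> R \<gamma> \<eta>\<^sub>\<pi> x a) - (\<integral>w. \<phi> w \<partial>bellman_op p \<pi> R \<gamma> \<eta> x a)
      = (\<Sum>x'\<in>UNIV. \<Sum>a'\<in>UNIV. pmf (p x a) x' * pmf (\<pi> x') a'
          * ((\<integral>r. A \<eta>\<^sub>\<pi> x' a' r \<partial>R x a) - (\<integral>r. A \<eta> x' a' r \<partial>R x a)))"
    unfolding integral_bellman_op[where E=\<eta>\<^sub>\<pi>, OF prob_space_R sets_R prob_space_eta_pi sets_eta_pi \<phi>_measurable \<phi>_bounded]
      integral_bellman_op[where E=\<eta>, OF prob_space_R sets_R prob_space_eta sets_eta \<phi>_measurable \<phi>_bounded]
    by (simp add: A_def right_diff_distrib sum_subtractf)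
  also have "\<dots> \<le> (\<Sum>x'\<in>UNIV. \<Sum>a'\<in>UNIV. pmf (p x a) x' * pmf (\<pi> x') a' * (\<gamma> / 2 + \<gamma> * M))"
    by (intro sum_mono mult_left_mono gap) simp
  also have "\<dots> = \<gamma> / 2 + \<gamma> * M"
    by (rule sum_pmf_pair_const)
  finally show ?thesis
    unfolding \<phi>_def .
qed

lemma stat_gap_eq_integral_diff:
  obtains e where "\<And>k. \<bar>e k\<bar> \<le> 1"
    and "stat_gap (x, a) = (\<integral>w. clip_comb e (K - 1) (coord w) \<partial>\<eta>\<^sub>\<pi> x a) - (\<integral>w. clip_comb e (K - 1) (coord w) \<partial>\<eta> x a)"
proof
  define d where "d k = s_stat z k (\<eta>\<^sub>\<pi> x a) - s_stat z k (\<eta> x a)" for k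
  show "\<bar>sgn (d k)\<bar> \<le> 1" for k
    by (simp add: abs_sgn_eq)
  have "stat_gap (x, a) = (\<Sum>k=1..K - 1. sgn (d k) * d k)"
    unfolding stat_gap_def d_def by (simp add: abs_sgn mult.commute)
  also have "\<dots> = (\<integral>w. clip_comb (\<lambda>k. sgn (d k)) (K - 1) (coord w) \<partial>\<eta>\<^sub>\<pi> x a)
      - (\<integral>w. clip_comb (\<lambda>k. sgn (d k)) (K - 1) (coord w) \<partial>\<eta> x a)"
    by (simp add: prob_space.integral_clip_comb[OF prob_space_eta_pi] prob_space.integral_clip_comb[OF prob_space_eta]
        measurable_cong_sets[OF sets_eta_pi refl] measurable_cong_sets[OF sets_eta refl]
        d_def s_stat_eq right_diff_distrib sum_subtractf)
  finally show "stat_gap (x, a) = (\<integral>w. clip_comb (\<lambda>k. sgn (d k)) (K - 1) (coord w) \<partial>\<eta>\<^sub>\<pi> x a)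
      - (\<integral>w. clip_comb (\<lambda>k. sgn (d k)) (K - 1) (coord w) \<partial>\<eta> x a)" .
qed

lemma stat_gap_le: "stat_gap s \<le> \<gamma> / 2 + \<gamma> * Max (range stat_gap)"
proof -
  obtain x a where s: "s = (x, a)"
    by (cases s)
  obtain e where e: "\<And>k. \<bar>e k\<bar> \<le> 1"
    and gap: "stat_gap (x, a) = (\<integral>w. clip_comb e (K - 1) (coord w) \<partial>\<eta>\<^sub>\<pi> x a) - (\<integral>w. clip_comb e (K - 1) (coord w) \<partial>\<eta> x a)"
    using stat_gap_eq_integral_diff[where x=x and a=a] by blast
  have "stat_gap s = (\<integral>w. clip_comb e (K - 1) (coord w) \<partial>bellman_op p \<pi> R \<gamma> \<eta>\<^sub>\<pi> x a)
      - (\<integral>w. clip_comb e (K - 1) (coord w) \<partial>bellman_op p \<pi> R \<gamma> \<eta> x a)"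
    unfolding s gap integral_eta_eq_bellman[OF e]
    by (subst eta_pi_bellman_fixed_point[OF gamma_nonneg gamma_less_1]) (rule refl)
  also have "\<dots> \<le> \<gamma> / 2 + \<gamma> * Max (range stat_gap)"
    by (intro bellman_clip_comb_gap_le e Max_ge) auto
  finally show ?thesis .
qed

lemma Max_stat_gap_le: "Max (range stat_gap) \<le> \<gamma> / (2 * (1 - \<gamma>))"
proof -
  have "Max (range stat_gap) \<in> range stat_gap"
    by (rule Max_in) auto
  then obtain s where "Max (range stat_gap) = stat_gap s"
    by blast
  then have "Max (range stat_gap) * (1 - \<gamma>) \<le> \<gamma> / 2"
    using stat_gap_le[of s] by (simp add: algebra_simps)
  then show ?thesis
    using gamma_less_1 by (simp add: field_simps)
qed

end

theorem theorem2:
  fixes \<gamma> Rmax :: real and K :: nat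
    and p :: "'x::finite \<Rightarrow> 'a::finite \<Rightarrow> 'x pmf"
    and \<pi> :: "'x \<Rightarrow> 'a pmf"
    and R :: "'x \<Rightarrow> 'a \<Rightarrow> real measure"
    and \<eta> :: "'x \<Rightarrow> 'a \<Rightarrow> real measure"
  assumes "0 \<le> \<gamma>" and "\<gamma> < 1" and "0 < Rmax" and "2 \<le> K"
    and "\<And>x a. prob_space (R x a)"
    and "\<And>x a. sets (R x a) = sets borel"
    and "\<And>x a. emeasure (R x a) {- Rmax..Rmax} = 1"
    and "\<And>x a. prob_space (\<eta> x a)"
    and "\<And>x a. sets (\<eta> x a) = sets borel"
    and "\<And>x a. emeasure (\<eta> x a) (zgrid \<gamma> Rmax K ` {1..K}) = 1"
    and "\<And>x a. \<eta> x a = cramer_proj (zgrid \<gamma> Rmax K) K (bellman_op p \<pi> R \<gamma> \<eta> x a)"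
  shows "(SUP xa \<in> (UNIV :: ('x \<times> 'a) set).
            (1 / (real K - 1)) *
            (\<Sum>k = 1..K - 1. \<bar>s_stat (zgrid \<gamma> Rmax K) k (eta_pi p \<pi> R \<gamma> (fst xa) (snd xa))
                               - s_stat (zgrid \<gamma> Rmax K) k (\<eta> (fst xa) (snd xa))\<bar>))
         \<le> \<gamma> / (2 * (1 - \<gamma>) * (real K - 1))"
proof -
  interpret cdrl_fixed_point \<gamma> Rmax K p \<pi> R \<eta>
    by (intro cdrl_fixed_point.intro cramer_grid.intro bounded_reward_mdp.intro cdrl_fixed_point_axioms.intro assms)
  have "(1 / (real K - 1)) * stat_gap s \<le> \<gamma> / (2 * (1 - \<gamma>) * (real K - 1))" for s
  proof -
    have "stat_gap s \<le> \<gamma> / (2 * (1 - \<gamma>))"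
      by (rule order.trans[OF Max_ge Max_stat_gap_le]) auto
    then have "(1 / (real K - 1)) * stat_gap s \<le> (1 / (real K - 1)) * (\<gamma> / (2 * (1 - \<gamma>)))"
      using K_ge_2 by (intro mult_left_mono) auto
    then show ?thesis
      by (simp add: mult.commute)
  qed
  then show ?thesis
    unfolding stat_gap_def by (intro cSUP_least) auto
qed

end
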